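(* Let $d\ge 3$, let $D$ be a finite subset of $\mathbb{Z}^d$ and let $C$ be a closed convex subset of $\ell^1(D)$. For any integer $t\ge1$, $$\inf_{x\in\overline{D}}P_x\Big(\frac1t L^D_t\in C,\ \tau(D,t)<\infty\Big)\le\exp\Big(-t\inf_{h\in C,\,h\ge0}\frac12\mathcal{E}(\sqrt h,D)\Big).$$
   Context: $P_x$ is the law of the discrete-time simple random walk $(S_k)_{k\ge0}$ on $\mathbb{Z}^d$ started at $x$. $L_k(y)=\sum_{j=0}^{k-1}1_{\{S_j=y\}}$ and $L_k(D)=\sum_{y\in D}L_k(y)$. For $t\in\mathbb{N}$, $\tau(D,t)=\inf\{k\ge1: L_k(D)=t\}$, and $L^D_t$ is the function on $D$ given by $L^D_t(x)=L_{\tau(D,t)}(x)$. $\ell^1(D)$ is equipped with the norm $\|f\|_{1,D}=\sum_{x\in D}|f(x)|$. $\overline D=D\cup\{x\in\mathbb{Z}^d:\exists y\in D,\ |x-y|=1\}$. For $f:D\to\mathbb{R}$, $\mathcal{E}(f,D)=\frac{1}{2d}\sum_{y,z\in D,\ |y-z|=1}(f(y)-f(z))^2$ (sum over ordered pairs). The infimum over an empty set is $+\infty$. *)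

theory Defs
  imports "HOL-Probability.Probability"
begin

text \<open>Points of Z^d are functions 'd => int, with 'd a finite index type, d = CARD('d).\<close>

definition adj :: "('d::finite \<Rightarrow> int) \<Rightarrow> ('d \<Rightarrow> int) \<Rightarrow> bool" where
  "adj x y \<longleftrightarrow> (\<Sum>i\<in>UNIV. (x i - y i)^2) = 1"

definition unit_steps :: "('d::finite \<Rightarrow> int) set" where
  "unit_steps = {e. adj e (\<lambda>_. 0)}"

definition srw_steps :: "('d::finite \<Rightarrow> int) stream measure" where
  "srw_steps = stream_space (measure_pmf (pmf_of_set unit_steps))"

definition walk :: "('d::finite \<Rightarrow> int) \<Rightarrow> ('d \<Rightarrow> int) stream \<Rightarrow> nat \<Rightarrow> ('d \<Rightarrow> int)" where
  "walk x \<omega> k = (\<lambda>i. x i + (\<Sum>j<k. (\<omega> !! j) i))"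

definition loc :: "('d::finite \<Rightarrow> int) \<Rightarrow> ('d \<Rightarrow> int) stream \<Rightarrow> nat \<Rightarrow> ('d \<Rightarrow> int) \<Rightarrow> nat" where
  "loc x \<omega> k y = card {j. j < k \<and> walk x \<omega> j = y}"

definition locD :: "('d::finite \<Rightarrow> int) \<Rightarrow> ('d \<Rightarrow> int) stream \<Rightarrow> nat \<Rightarrow> ('d \<Rightarrow> int) set \<Rightarrow> nat" where
  "locD x \<omega> k D = (\<Sum>y\<in>D. loc x \<omega> k y)"

text \<open>tau(D,t) < infinity, and tau(D,t) as the least such k (meaningful only when finite).\<close>
definition tau_fin :: "('d::finite \<Rightarrow> int) \<Rightarrow> ('d \<Rightarrow> int) stream \<Rightarrow> ('d \<Rightarrow> int) set \<Rightarrow> nat \<Rightarrow> bool" where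
  "tau_fin x \<omega> D t \<longleftrightarrow> (\<exists>k\<ge>1. locD x \<omega> k D = t)"

definition tau :: "('d::finite \<Rightarrow> int) \<Rightarrow> ('d \<Rightarrow> int) stream \<Rightarrow> ('d \<Rightarrow> int) set \<Rightarrow> nat \<Rightarrow> nat" where
  "tau x \<omega> D t = (LEAST k. k \<ge> 1 \<and> locD x \<omega> k D = t)"

text \<open>L^D_t as an element of l^1(D), represented as a function vanishing outside D.\<close>
definition locTD :: "('d::finite \<Rightarrow> int) \<Rightarrow> ('d \<Rightarrow> int) stream \<Rightarrow> ('d \<Rightarrow> int) set \<Rightarrow> nat \<Rightarrow> (('d \<Rightarrow> int) \<Rightarrow> real)" where
  "locTD x \<omega> D t = (\<lambda>y. if y \<in> D then real (loc x \<omega> (tau x \<omega> D t) y) else 0)"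

definition closure_nb :: "('d::finite \<Rightarrow> int) set \<Rightarrow> ('d \<Rightarrow> int) set" where
  "closure_nb D = D \<union> {x. \<exists>y\<in>D. adj x y}"

definition energy :: "(('d::finite \<Rightarrow> int) \<Rightarrow> real) \<Rightarrow> ('d \<Rightarrow> int) set \<Rightarrow> real" where
  "energy f D = (1 / (2 * real CARD('d))) *
     (\<Sum>(y,z)\<in>{(y,z). y \<in> D \<and> z \<in> D \<and> adj y z}. (f y - f z)^2)"

text \<open>Subsets of l^1(D): functions vanishing outside D.\<close>
definition l1_set :: "('a \<Rightarrow> real) set \<Rightarrow> 'a set \<Rightarrow> bool" where
  "l1_set C D \<longleftrightarrow> (\<forall>f\<in>C. \<forall>y. y \<notin> D \<longrightarrow> f y = 0)"

definition l1_convex :: "('a \<Rightarrow> real) set \<Rightarrow> bool" where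
  "l1_convex C \<longleftrightarrow> (\<forall>f\<in>C. \<forall>g\<in>C. \<forall>u::real. 0 \<le> u \<and> u \<le> 1 \<longrightarrow> (\<lambda>y. u * f y + (1 - u) * g y) \<in> C)"

definition l1_closed :: "('a \<Rightarrow> real) set \<Rightarrow> 'a set \<Rightarrow> bool" where
  "l1_closed C D \<longleftrightarrow> (\<forall>F g. (\<forall>n. F n \<in> C) \<longrightarrow> (\<forall>y. y \<notin> D \<longrightarrow> g y = 0) \<longrightarrow>
      (\<lambda>n. \<Sum>y\<in>D. \<bar>F n y - g y\<bar>) \<longlonglongrightarrow> 0 \<longrightarrow> g \<in> C)"

end

theory Submission
  imports Defs "HOL-Library.Function_Algebras"
begin

text \<open>
  Let \<open>Q\<close> be the kernel of the walk watched only while it is in \<open>D\<close> (\<open>trace_kernel\<close> below).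
  By time reversal \<open>Q\<close> is symmetric; it is substochastic and at least \<open>1 / (2 d)\<close> between
  neighbours, so for every probability vector \<open>h\<close> on \<open>D\<close> the energy satisfies \<open>E(\<surd>h) / 2 \<le> 1 - \<langle>\<surd>h, Q \<surd>h\<rangle>\<close>.

  For \<open>f > 0\<close> on \<open>D\<close> let \<open>u\<close> be the harmonic extension of \<open>f\<close> off \<open>D\<close> and \<open>V = log (f / Q f)\<close>.
  Then \<open>u\<close> at the current position times \<open>exp\<close> of the sum of \<open>V\<close> over the visits to \<open>D\<close> so far
  is a martingale. Started at a minimiser of \<open>u\<close> on the closure of \<open>D\<close> and stopped at
  \<open>\<tau>(D, t)\<close>, it gives \<open>P(L / t \<in> C) \<le> exp (- t m)\<close> whenever \<open>m \<le> \<langle>l, V\<rangle>\<close> for all probability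
  vectors \<open>l \<in> C\<close>.

  Choose \<open>f = \<surd>(g + \<delta>)\<close>, where \<open>g\<close> maximises \<open>\<langle>\<surd>(h + \<delta>), Q \<surd>(h + \<delta>)\<rangle>\<close> over the compact
  convex set of probability vectors in \<open>C\<close>. The first-order condition at \<open>g\<close> and
  \<open>log x \<ge> 1 - 1 / x\<close> give \<open>\<langle>l, V\<rangle> \<ge> 1 - \<langle>f, Q f\<rangle>\<close>, which differs from
  \<open>1 - \<langle>\<surd>g, Q \<surd>g\<rangle> \<ge> E(\<surd>g) / 2\<close> by \<open>O(\<surd>\<delta>)\<close>; finally let \<open>\<delta> \<rightarrow> 0\<close>.
\<close>

section \<open>Unit steps and the averaging operator\<close>

lemma unit_steps_subset_signed_basis:
  "(unit_steps :: ('d::finite \<Rightarrow> int) set) \<subseteq> (\<lambda>(i, c) j. if j = i then c else 0) ` (UNIV \<times> {1, -1})"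
proof
  fix e :: "'d \<Rightarrow> int"
  assume "e \<in> unit_steps"
  then have sum_sq: "(\<Sum>j\<in>UNIV. (e j)\<^sup>2) = 1"
    by (simp add: unit_steps_def adj_def)
  then obtain i where "e i \<noteq> 0"
    by (metis (no_types, lifting) power_zero_numeral sum.neutral zero_neq_one)
  then have "(e i)\<^sup>2 \<ge> 1"
    by (smt (verit) int_one_le_iff_zero_less zero_less_power2)
  moreover have "(\<Sum>j\<in>UNIV. (e j)\<^sup>2) = (e i)\<^sup>2 + (\<Sum>j\<in>UNIV - {i}. (e j)\<^sup>2)"
    by (simp add: sum.remove)
  moreover have "(\<Sum>j\<in>UNIV - {i}. (e j)\<^sup>2) \<ge> 0"
    by (simp add: sum_nonneg)
  ultimately have ei: "(e i)\<^sup>2 = 1" and rest: "(\<Sum>j\<in>UNIV - {i}. (e j)\<^sup>2) = 0"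
    using sum_sq by linarith+
  have "e j = 0" if "j \<noteq> i" for j
    using rest that by (simp add: sum_nonneg_eq_0_iff)
  then have "e = (\<lambda>j. if j = i then e i else 0)"
    by auto
  moreover have "e i \<in> {1, -1}"
    using ei by (auto simp: power2_eq_1_iff)
  ultimately show "e \<in> (\<lambda>(i, c) j. if j = i then c else 0) ` (UNIV \<times> {1, -1})"
    by (intro image_eqI[of _ _ "(i, e i)"]) auto
qed

lemma finite_unit_steps: "finite (unit_steps :: ('d::finite \<Rightarrow> int) set)"
  by (rule finite_subset[OF unit_steps_subset_signed_basis]) auto

lemma card_unit_steps_le: "card (unit_steps :: ('d::finite \<Rightarrow> int) set) \<le> 2 * CARD('d)"
proof -
  have "card (unit_steps :: ('d \<Rightarrow> int) set)
      \<le> card ((\<lambda>(i, c) j. if j = i then c else 0) ` (UNIV \<times> {1, -1 :: int}) :: ('d \<Rightarrow> int) set)"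
    by (rule card_mono[OF _ unit_steps_subset_signed_basis]) auto
  also have "\<dots> \<le> card (UNIV \<times> {1, -1 :: int} :: ('d \<times> int) set)"
    by (rule card_image_le) simp
  finally show ?thesis
    by (simp add: card_cartesian_product)
qed

lemma basis_in_unit_steps: "(\<lambda>j. if j = i then 1 else 0) \<in> (unit_steps :: ('d::finite \<Rightarrow> int) set)"
proof -
  have "(\<Sum>j\<in>UNIV. ((if j = i then 1 else 0) - 0 :: int)\<^sup>2) = (\<Sum>j\<in>UNIV. if j = i then 1 else 0)"
    by (rule sum.cong) auto
  then show ?thesis
    by (simp add: unit_steps_def adj_def)
qed

lemma unit_steps_nonempty: "(unit_steps :: ('d::finite \<Rightarrow> int) set) \<noteq> {}"
  using basis_in_unit_steps by blast

lemma card_unit_steps_pos: "card (unit_steps :: ('d::finite \<Rightarrow> int) set) > 0"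
  using finite_unit_steps unit_steps_nonempty by (simp add: card_gt_0_iff)

lemma uminus_in_unit_steps: "s \<in> unit_steps \<Longrightarrow> - s \<in> unit_steps"
  by (simp add: unit_steps_def adj_def)

lemma sum_unit_steps_uminus:
  "(\<Sum>s\<in>(unit_steps :: ('d::finite \<Rightarrow> int) set). g (- s)) = (\<Sum>s\<in>unit_steps. g s)"
  by (rule sum.reindex_bij_witness[of _ uminus uminus]) (auto simp: uminus_in_unit_steps)

lemma adj_iff_diff_in_unit_steps: "adj x y \<longleftrightarrow> x - y \<in> unit_steps"
  by (simp add: adj_def unit_steps_def)

lemma adj_commute: "adj x y \<longleftrightarrow> adj y x"
  using uminus_in_unit_steps by (fastforce simp: adj_iff_diff_in_unit_steps)

lemma closure_nb_eq: "closure_nb D = D \<union> (\<Union>y\<in>D. (\<lambda>s. y + s) ` unit_steps)"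
  unfolding closure_nb_def adj_iff_diff_in_unit_steps
  by (auto simp: image_iff) (metis add.commute diff_add_cancel, metis add_diff_cancel_left')

lemma add_unit_step_in_closure_nb: "y \<in> D \<Longrightarrow> s \<in> unit_steps \<Longrightarrow> y + s \<in> closure_nb D"
  by (auto simp: closure_nb_eq)

lemma finite_closure_nb: "finite D \<Longrightarrow> finite (closure_nb (D :: ('d::finite \<Rightarrow> int) set))"
  by (simp add: closure_nb_eq finite_unit_steps)

definition step_avg :: "(('d::finite \<Rightarrow> int) \<Rightarrow> real) \<Rightarrow> ('d \<Rightarrow> int) \<Rightarrow> real" where
  "step_avg u z = (\<Sum>s\<in>unit_steps. u (z + s)) / card (unit_steps :: ('d \<Rightarrow> int) set)"

lemma step_avg_const [simp]:
  fixes z :: "'d::finite \<Rightarrow> int"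
  shows "step_avg (\<lambda>_. c) z = c"
  using card_unit_steps_pos[where 'd='d] by (simp add: step_avg_def)

lemma step_avg_add: "step_avg (\<lambda>z. u z + v z) z = step_avg u z + step_avg v z"
  by (simp add: step_avg_def sum.distrib add_divide_distrib)

lemma step_avg_cmult: "step_avg (\<lambda>z. c * u z) z = c * step_avg u z"
  by (simp add: step_avg_def sum_distrib_left)

lemma step_avg_sum: "step_avg (\<lambda>z. \<Sum>i\<in>I. u i z) z = (\<Sum>i\<in>I. step_avg (u i) z)"
  by (simp add: step_avg_def sum_divide_distrib[symmetric]) (rule disjI2, rule sum.swap)

lemma step_avg_suminf:
  assumes "\<And>z'. summable (\<lambda>k. F k z')"
  shows "step_avg (\<lambda>z'. \<Sum>k. F k z') z = (\<Sum>k. step_avg (F k) z)"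
proof -
  have "(\<Sum>s\<in>unit_steps. \<Sum>k. F k (z + s)) = (\<Sum>k. \<Sum>s\<in>unit_steps. F k (z + s))"
    by (rule suminf_sum[symmetric]) (rule assms)
  moreover have "summable (\<lambda>k. \<Sum>s\<in>unit_steps. F k (z + s))"
    by (intro summable_sum assms)
  ultimately show ?thesis
    unfolding step_avg_def by (simp add: suminf_divide)
qed

lemma step_avg_mono:
  "(\<And>s. s \<in> unit_steps \<Longrightarrow> u (z + s) \<le> v (z + s)) \<Longrightarrow> step_avg u z \<le> step_avg v z"
  unfolding step_avg_def by (intro divide_right_mono sum_mono) auto

lemma step_avg_nonneg: "(\<And>s. s \<in> unit_steps \<Longrightarrow> u (z + s) \<ge> 0) \<Longrightarrow> step_avg u z \<ge> 0"
  using step_avg_mono[where u="\<lambda>_. 0" and v=u] by simp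

lemma step_avg_ge_single:
  fixes z :: "'d::finite \<Rightarrow> int"
  assumes "\<And>s. s \<in> unit_steps \<Longrightarrow> u (z + s) \<ge> 0" and "s \<in> unit_steps"
  shows "u (z + s) / card (unit_steps :: ('d \<Rightarrow> int) set) \<le> step_avg u z"
proof -
  have "u (z + s) \<le> (\<Sum>s\<in>unit_steps. u (z + s))"
    by (rule member_le_sum) (use assms in \<open>auto simp: finite_unit_steps\<close>)
  then show ?thesis
    unfolding step_avg_def by (simp add: divide_right_mono)
qed

lemma step_avg_pos:
  fixes z :: "'d::finite \<Rightarrow> int"
  assumes "\<And>s. s \<in> unit_steps \<Longrightarrow> u (z + s) > 0"
  shows "step_avg u z > 0"
  unfolding step_avg_def using assms card_unit_steps_pos[where 'd='d]
  by (intro divide_pos_pos sum_pos finite_unit_steps unit_steps_nonempty) auto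

lemma step_avg_swap:
  "step_avg (\<lambda>z'. step_avg (\<lambda>w'. F z' w') w) z = step_avg (\<lambda>w'. step_avg (\<lambda>z'. F z' w') z) w"
proof -
  have "(\<Sum>s\<in>unit_steps. \<Sum>s'\<in>unit_steps. F (z + s) (w + s'))
      = (\<Sum>s'\<in>unit_steps. \<Sum>s\<in>unit_steps. F (z + s) (w + s'))"
    by (rule sum.swap)
  then show ?thesis
    by (simp add: step_avg_def sum_divide_distrib[symmetric])
qed

lemma step_avg_swap_commute:
  assumes "\<And>a b. F a b = F b a"
  shows "step_avg (\<lambda>z'. step_avg (\<lambda>w'. F z' w') w) z = step_avg (\<lambda>w'. step_avg (\<lambda>z'. F w' z') z) w"
  by (subst step_avg_swap) (simp add: assms)

lemma step_avg_indicator_commute: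
  "step_avg (\<lambda>z'. if z' = w then 1 else 0) z = step_avg (\<lambda>w'. if w' = z then 1 else 0) w"
proof -
  have "(\<Sum>s\<in>unit_steps. if z + s = w then 1 else 0 :: real)
      = (\<Sum>s\<in>unit_steps. if w + - s = z then 1 else 0)"
    by (rule sum.cong) (auto simp: algebra_simps)
  also have "\<dots> = (\<Sum>s\<in>unit_steps. if w + s = z then 1 else 0)"
    by (rule sum_unit_steps_uminus)
  finally show ?thesis
    by (simp add: step_avg_def)
qed

section \<open>Hitting probabilities and the trace kernel\<close>

text \<open>\<open>avoid_prob D k z w\<close> is the probability that the walk from \<open>z\<close> stays off \<open>D\<close> at
  times \<open>0, \<dots>, k\<close> and is at \<open>w\<close> at time \<open>k\<close>.\<close>
primrec avoid_prob :: "('d::finite \<Rightarrow> int) set \<Rightarrow> nat \<Rightarrow> ('d \<Rightarrow> int) \<Rightarrow> ('d \<Rightarrow> int) \<Rightarrow> real" where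
  "avoid_prob D 0 z w = (if z = w \<and> z \<notin> D then 1 else 0)"
| "avoid_prob D (Suc k) z w = (if z \<in> D then 0 else step_avg (\<lambda>z'. avoid_prob D k z' w) z)"

lemma avoid_prob_nonneg: "avoid_prob D k z w \<ge> 0"
  by (induction k arbitrary: z) (auto intro: step_avg_nonneg)

lemma avoid_prob_in: "z \<in> D \<Longrightarrow> avoid_prob D k z = (\<lambda>_. 0)"
  by (cases k) auto

lemma avoid_prob_0_notin: "z \<notin> D \<Longrightarrow> avoid_prob D 0 z = (\<lambda>w. if w = z then 1 else 0)"
  by (intro ext) auto

lemma avoid_prob_commute: "avoid_prob D k z w = avoid_prob D k w z"
  \<comment> \<open>Time reversal: one step is peeled off each end of the path, hence the induction in steps of two.\<close>
proof (induction k arbitrary: z w rule: induct_nat_012)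
  case 0
  then show ?case by auto
next
  case 1
  have "avoid_prob D 1 z w =
      (if z \<in> D \<or> w \<in> D then 0 else step_avg (\<lambda>z'. if z' = w then 1 else 0) z)" for z w
  proof -
    have "(\<lambda>z'. avoid_prob D 0 z' w) = (if w \<in> D then (\<lambda>_. 0) else (\<lambda>z'. if z' = w then 1 else 0))"
      by auto
    then show ?thesis
      by simp
  qed
  then show ?case
    using step_avg_indicator_commute by auto
next
  case (ge2 k)
  have step: "avoid_prob D (Suc k) z' w = (if w \<in> D then 0 else step_avg (avoid_prob D k z') w)"
    for z' w
  proof -
    have "avoid_prob D (Suc k) z' w = avoid_prob D (Suc k) w z'"
      by (rule ge2.IH(2))
    also have "\<dots> = (if w \<in> D then 0 else step_avg (\<lambda>w'. avoid_prob D k w' z') w)"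
      by simp
    also have "(\<lambda>w'. avoid_prob D k w' z') = avoid_prob D k z'"
      by (rule ext) (rule ge2.IH(1))
    finally show ?thesis .
  qed
  have "avoid_prob D (Suc (Suc k)) z w = (if z \<in> D \<or> w \<in> D then 0
      else step_avg (\<lambda>z'. step_avg (avoid_prob D k z') w) z)" for z w
  proof -
    have "(\<lambda>z'. avoid_prob D (Suc k) z' w) = (\<lambda>z'. if w \<in> D then 0 else step_avg (avoid_prob D k z') w)"
      by (rule ext) (rule step)
    then show ?thesis
      unfolding avoid_prob.simps(2)[of D "Suc k"] by (cases "w \<in> D") simp_all
  qed
  then show ?case
    using step_avg_swap_commute[of "avoid_prob D k", OF ge2.IH(1)] by auto
qed

text \<open>\<open>entrance_prob D k z y\<close> is the probability that the walk from \<open>z\<close> stays off \<open>D\<close>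
  at times \<open>0, \<dots>, k\<close> and is at \<open>y\<close> at time \<open>k + 1\<close> (the last step is averaged at \<open>y\<close>,
  which is legitimate because the step distribution is symmetric).\<close>
definition entrance_prob :: "('d::finite \<Rightarrow> int) set \<Rightarrow> nat \<Rightarrow> ('d \<Rightarrow> int) \<Rightarrow> ('d \<Rightarrow> int) \<Rightarrow> real" where
  "entrance_prob D k z y = step_avg (avoid_prob D k z) y"

lemma entrance_prob_nonneg: "entrance_prob D k z y \<ge> 0"
  unfolding entrance_prob_def by (intro step_avg_nonneg avoid_prob_nonneg)

lemma entrance_prob_in: "z \<in> D \<Longrightarrow> entrance_prob D k z y = 0"
  by (simp add: entrance_prob_def avoid_prob_in)

lemma entrance_prob_0:
  "entrance_prob D 0 z y = (if z \<in> D then 0 else step_avg (\<lambda>z'. if z' = y then 1 else 0) z)"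
  by (simp add: entrance_prob_def avoid_prob_in avoid_prob_0_notin step_avg_indicator_commute[of z])

lemma entrance_prob_Suc:
  "entrance_prob D (Suc k) z y = (if z \<in> D then 0 else step_avg (\<lambda>z'. entrance_prob D k z' y) z)"
proof (cases "z \<in> D")
  case True
  then show ?thesis by (simp add: entrance_prob_in)
next
  case False
  then have "avoid_prob D (Suc k) z = (\<lambda>w. step_avg (\<lambda>z'. avoid_prob D k z' w) z)"
    by (intro ext) simp
  then show ?thesis
    using False by (simp add: entrance_prob_def) (rule step_avg_swap)
qed

lemma step_avg_entrance_prob_commute:
  "step_avg (\<lambda>z. entrance_prob D k z y') y = step_avg (\<lambda>z. entrance_prob D k z y) y'"
  unfolding entrance_prob_def by (subst step_avg_swap) (simp add: avoid_prob_commute)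

lemma sum_lessThan_Suc_entrance_prob:
  assumes "z \<notin> D"
  shows "(\<Sum>k<Suc n. entrance_prob D k z y)
    = step_avg (\<lambda>z'. (if z' = y then 1 else 0) + (\<Sum>k<n. entrance_prob D k z' y)) z"
  using assms
  by (simp only: sum.lessThan_Suc_shift) (simp add: entrance_prob_0 entrance_prob_Suc step_avg_add step_avg_sum)

lemma sum_entrance_prob_le:
  assumes "finite D"
  shows "(\<Sum>y\<in>D. \<Sum>k<n. entrance_prob D k z y) \<le> 1"
proof (induction n arbitrary: z)
  case 0
  then show ?case by simp
next
  case (Suc n)
  show ?case
  proof (cases "z \<in> D")
    case True
    then show ?thesis by (simp add: entrance_prob_in)
  next
    case False
    have "(\<Sum>y\<in>D. \<Sum>k<Suc n. entrance_prob D k z y)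
        = (\<Sum>y\<in>D. step_avg (\<lambda>z'. (if z' = y then 1 else 0) + (\<Sum>k<n. entrance_prob D k z' y)) z)"
      by (simp only: sum_lessThan_Suc_entrance_prob[OF False])
    also have "\<dots> = step_avg (\<lambda>z'. (\<Sum>y\<in>D. if z' = y then 1 else 0) + (\<Sum>y\<in>D. \<Sum>k<n. entrance_prob D k z' y)) z"
      by (simp only: step_avg_sum[symmetric] sum.distrib)
    also have "\<dots> \<le> step_avg (\<lambda>_. 1) z"
    proof (rule step_avg_mono)
      show "(\<Sum>y\<in>D. if z' = y then 1 else 0) + (\<Sum>y\<in>D. \<Sum>k<n. entrance_prob D k z' y) \<le> 1" for z'
        using Suc.IH[of z'] assms by (cases "z' \<in> D") (simp_all add: entrance_prob_in)
    qed
    finally show ?thesis by simp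
  qed
qed

lemma summable_entrance_prob:
  assumes "finite D" "y \<in> D"
  shows "summable (\<lambda>k. entrance_prob D k z y)"
proof (rule summableI_nonneg_bounded[where x = 1])
  fix n
  have "(\<Sum>k<n. entrance_prob D k z y) \<le> (\<Sum>y\<in>D. \<Sum>k<n. entrance_prob D k z y)"
    by (rule member_le_sum) (use assms in \<open>auto intro: sum_nonneg entrance_prob_nonneg\<close>)
  then show "(\<Sum>k<n. entrance_prob D k z y) \<le> 1"
    using sum_entrance_prob_le[OF assms(1), where n = n and z = z] by linarith
qed (rule entrance_prob_nonneg)

text \<open>For \<open>y \<in> D\<close>, \<open>hit_prob D z y\<close> is the probability that the first visit of the walk
  from \<open>z\<close> to \<open>D\<close> (at a time \<open>\<ge> 0\<close>) is at \<open>y\<close>.\<close>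
definition hit_prob :: "('d::finite \<Rightarrow> int) set \<Rightarrow> ('d \<Rightarrow> int) \<Rightarrow> ('d \<Rightarrow> int) \<Rightarrow> real" where
  "hit_prob D z y = (if z = y then 1 else 0) + (\<Sum>k. entrance_prob D k z y)"

lemma hit_prob_in: "z \<in> D \<Longrightarrow> hit_prob D z y = (if z = y then 1 else 0)"
  by (simp add: hit_prob_def entrance_prob_in)

lemma hit_prob_nonneg: "finite D \<Longrightarrow> y \<in> D \<Longrightarrow> hit_prob D z y \<ge> 0"
  unfolding hit_prob_def
  by (intro add_nonneg_nonneg suminf_nonneg summable_entrance_prob entrance_prob_nonneg) auto

lemma hit_prob_harmonic:
  assumes "finite D" "y \<in> D" "z \<notin> D"
  shows "step_avg (\<lambda>z'. hit_prob D z' y) z = hit_prob D z y"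
proof -
  have "hit_prob D z y = entrance_prob D 0 z y + (\<Sum>k. entrance_prob D (Suc k) z y)"
    using assms suminf_split_head[OF summable_entrance_prob[OF assms(1,2)]]
    by (auto simp: hit_prob_def)
  also have "\<dots> = step_avg (\<lambda>z'. if z' = y then 1 else 0) z + (\<Sum>k. step_avg (\<lambda>z'. entrance_prob D k z' y) z)"
    using assms by (simp add: entrance_prob_0 entrance_prob_Suc)
  also have "\<dots> = step_avg (\<lambda>z'. hit_prob D z' y) z"
    unfolding hit_prob_def step_avg_add
    by (subst step_avg_suminf) (use assms summable_entrance_prob in auto)
  finally show ?thesis ..
qed

lemma sum_hit_prob_le:
  assumes "finite D"
  shows "(\<Sum>y\<in>D. hit_prob D z y) \<le> 1"
proof (cases "z \<in> D")
  case True
  then show ?thesis using assms by (simp add: hit_prob_in)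
next
  case False
  have "(\<lambda>n. \<Sum>y\<in>D. \<Sum>k<n. entrance_prob D k z y) \<longlonglongrightarrow> (\<Sum>y\<in>D. \<Sum>k. entrance_prob D k z y)"
    by (intro tendsto_sum summable_LIMSEQ summable_entrance_prob assms)
  then have "(\<Sum>y\<in>D. \<Sum>k. entrance_prob D k z y) \<le> 1"
    by (rule LIMSEQ_le_const2) (use sum_entrance_prob_le[OF assms] in auto)
  moreover have "hit_prob D z y = (\<Sum>k. entrance_prob D k z y)" if "y \<in> D" for y
    using False that by (auto simp: hit_prob_def)
  ultimately show ?thesis by simp
qed

lemma hit_prob_pos_if_adj:
  fixes z :: "'d::finite \<Rightarrow> int"
  assumes "finite D" "y \<in> D" "z \<notin> D" "adj z y"
  shows "hit_prob D z y > 0"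
proof -
  have step: "y - z \<in> unit_steps"
    using assms(4) adj_commute adj_iff_diff_in_unit_steps by blast
  have "0 < (if z + (y - z) = y then 1 else 0) / real (card (unit_steps :: ('d \<Rightarrow> int) set))"
    using card_unit_steps_pos[where 'd='d] by simp
  also have "\<dots> \<le> step_avg (\<lambda>z'. if z' = y then 1 else 0) z"
    by (rule step_avg_ge_single[OF _ step]) simp
  also have "\<dots> = entrance_prob D 0 z y"
    using assms(3) by (simp add: entrance_prob_0)
  also have "\<dots> \<le> (\<Sum>k. entrance_prob D k z y)"
    by (rule sum_le_suminf[where I = "{0}", simplified])
       (use assms summable_entrance_prob entrance_prob_nonneg in auto)
  also have "\<dots> = hit_prob D z y"
    using assms by (auto simp: hit_prob_def)
  finally show ?thesis .
qed

text \<open>For \<open>y, y' \<in> D\<close>, \<open>trace_kernel D y y'\<close> is the probability that the walk from \<open>y\<close>,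
  after its first step, next visits \<open>D\<close> at \<open>y'\<close>.\<close>
definition trace_kernel :: "('d::finite \<Rightarrow> int) set \<Rightarrow> ('d \<Rightarrow> int) \<Rightarrow> ('d \<Rightarrow> int) \<Rightarrow> real" where
  "trace_kernel D y y' = step_avg (\<lambda>z. hit_prob D z y') y"

lemma trace_kernel_nonneg: "finite D \<Longrightarrow> y' \<in> D \<Longrightarrow> trace_kernel D y y' \<ge> 0"
  unfolding trace_kernel_def by (intro step_avg_nonneg hit_prob_nonneg)

lemma trace_kernel_commute:
  assumes "finite D" "y \<in> D" "y' \<in> D"
  shows "trace_kernel D y y' = trace_kernel D y' y"
proof -
  have "step_avg (\<lambda>z. \<Sum>k. entrance_prob D k z y') y = (\<Sum>k. step_avg (\<lambda>z. entrance_prob D k z y') y)"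
    by (rule step_avg_suminf) (use assms summable_entrance_prob in auto)
  also have "\<dots> = (\<Sum>k. step_avg (\<lambda>z. entrance_prob D k z y) y')"
    by (simp only: step_avg_entrance_prob_commute)
  also have "\<dots> = step_avg (\<lambda>z. \<Sum>k. entrance_prob D k z y) y'"
    by (rule step_avg_suminf[symmetric]) (use assms summable_entrance_prob in auto)
  moreover have "step_avg (\<lambda>z. if z = y' then 1 else 0) y = step_avg (\<lambda>z. if z = y then 1 else 0) y'"
    by (rule step_avg_indicator_commute)
  moreover have "trace_kernel D y y'
      = step_avg (\<lambda>z. if z = y' then 1 else 0) y + step_avg (\<lambda>z. \<Sum>k. entrance_prob D k z y') y"
    for y y' unfolding trace_kernel_def hit_prob_def by (rule step_avg_add)
  ultimately show ?thesis
    by simp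
qed

lemma sum_trace_kernel_le:
  assumes "finite D"
  shows "(\<Sum>y'\<in>D. trace_kernel D y y') \<le> 1"
proof -
  have "(\<Sum>y'\<in>D. trace_kernel D y y') = step_avg (\<lambda>z. \<Sum>y'\<in>D. hit_prob D z y') y"
    by (simp add: trace_kernel_def step_avg_sum)
  also have "\<dots> \<le> step_avg (\<lambda>_. 1) y"
    by (rule step_avg_mono) (rule sum_hit_prob_le[OF assms])
  finally show ?thesis
    by simp
qed

lemma trace_kernel_ge_if_adj:
  fixes D :: "('d::finite \<Rightarrow> int) set"
  assumes "finite D" "y \<in> D" "y' \<in> D" "adj y y'"
  shows "1 / (2 * real CARD('d)) \<le> trace_kernel D y y'"
proof -
  have step: "y' - y \<in> unit_steps"
    using assms(4) adj_commute adj_iff_diff_in_unit_steps by blast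
  have "1 / (2 * real CARD('d)) \<le> 1 / card (unit_steps :: ('d \<Rightarrow> int) set)"
    using card_unit_steps_le[where 'd='d] card_unit_steps_pos[where 'd='d]
    by (intro divide_left_mono) (simp_all flip: of_nat_mult)
  also have "\<dots> = hit_prob D (y + (y' - y)) y' / card (unit_steps :: ('d \<Rightarrow> int) set)"
    using assms by (simp add: hit_prob_in)
  also have "\<dots> \<le> trace_kernel D y y'"
    unfolding trace_kernel_def
    by (rule step_avg_ge_single[OF _ step]) (use assms in \<open>simp add: hit_prob_nonneg\<close>)
  finally show ?thesis .
qed

definition harm_ext :: "('d::finite \<Rightarrow> int) set \<Rightarrow> (('d \<Rightarrow> int) \<Rightarrow> real) \<Rightarrow> ('d \<Rightarrow> int) \<Rightarrow> real" where
  "harm_ext D f z = (\<Sum>y\<in>D. f y * hit_prob D z y)"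

lemma harm_ext_in:
  assumes "finite D" "z \<in> D"
  shows "harm_ext D f z = f z"
proof -
  have "harm_ext D f z = (\<Sum>y\<in>D. if y = z then f y else 0)"
    unfolding harm_ext_def by (rule sum.cong) (auto simp: hit_prob_in assms(2))
  then show ?thesis
    using assms by simp
qed

lemma harm_ext_harmonic: "finite D \<Longrightarrow> z \<notin> D \<Longrightarrow> step_avg (harm_ext D f) z = harm_ext D f z"
  unfolding harm_ext_def by (simp add: step_avg_sum step_avg_cmult hit_prob_harmonic)

lemma step_avg_harm_ext: "step_avg (harm_ext D f) y = (\<Sum>y'\<in>D. trace_kernel D y y' * f y')"
  unfolding harm_ext_def trace_kernel_def by (simp add: step_avg_sum step_avg_cmult mult.commute)

lemma harm_ext_nonneg: "finite D \<Longrightarrow> (\<And>y. y \<in> D \<Longrightarrow> f y \<ge> 0) \<Longrightarrow> harm_ext D f z \<ge> 0"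
  unfolding harm_ext_def by (intro sum_nonneg mult_nonneg_nonneg hit_prob_nonneg) auto

lemma harm_ext_pos:
  assumes "finite D" "\<And>y. y \<in> D \<Longrightarrow> f y > 0" "z \<in> closure_nb D"
  shows "harm_ext D f z > 0"
proof (cases "z \<in> D")
  case True
  then show ?thesis using assms by (simp add: harm_ext_in)
next
  case False
  then obtain y where y: "y \<in> D" "adj z y"
    using assms(3) by (auto simp: closure_nb_def)
  have "0 < f y * hit_prob D z y"
    using assms(2)[OF y(1)] hit_prob_pos_if_adj[OF assms(1) y(1) False y(2)] by simp
  also have "\<dots> \<le> harm_ext D f z"
    unfolding harm_ext_def using assms(1,2) y(1)
    by (intro member_le_sum mult_nonneg_nonneg hit_prob_nonneg) (auto intro: less_imp_le)
  finally show ?thesis .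
qed

lemma trace_kernel_apply_pos:
  assumes "finite D" "\<And>y. y \<in> D \<Longrightarrow> f y > 0" "y \<in> D"
  shows "(\<Sum>y'\<in>D. trace_kernel D y y' * f y') > 0"
  unfolding step_avg_harm_ext[symmetric]
  using assms by (intro step_avg_pos harm_ext_pos add_unit_step_in_closure_nb)

section \<open>Occupation events of the walk\<close>

lemma walk_0 [simp]: "walk x \<omega> 0 = x"
  by (simp add: walk_def)

lemma walk_Suc_Cons: "walk x (s ## \<omega>) (Suc k) = walk (x + s) \<omega> k"
  unfolding walk_def by (rule ext) (simp only: sum.lessThan_Suc_shift, simp)

lemma loc_eq_sum: "loc x \<omega> k y = (\<Sum>j<k. if walk x \<omega> j = y then 1 else 0)"
proof -
  have "{j. j < k \<and> walk x \<omega> j = y} = {..<k} \<inter> {j. walk x \<omega> j = y}"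
    by auto
  then show ?thesis
    by (simp add: loc_def sum.If_cases)
qed

lemma loc_Suc_Cons: "loc x (s ## \<omega>) (Suc k) y = (if x = y then 1 else 0) + loc (x + s) \<omega> k y"
  unfolding loc_eq_sum by (simp only: sum.lessThan_Suc_shift walk_Suc_Cons) simp

lemma locD_0 [simp]: "locD x \<omega> 0 D = 0"
  by (simp add: locD_def loc_def)

lemma locD_Suc_Cons:
  "finite D \<Longrightarrow> locD x (s ## \<omega>) (Suc k) D = (if x \<in> D then 1 else 0) + locD (x + s) \<omega> k D"
  by (simp add: locD_def loc_Suc_Cons sum.distrib)

definition occupation :: "'a set \<Rightarrow> nat \<Rightarrow> ('a \<Rightarrow> nat) \<Rightarrow> 'a \<Rightarrow> real" where
  "occupation D t a = (\<lambda>y. if y \<in> D then real (a y) / real t else 0)"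

definition count_visit :: "'a set \<Rightarrow> 'a \<Rightarrow> ('a \<Rightarrow> nat) \<Rightarrow> 'a \<Rightarrow> nat" where
  "count_visit D z a = (if z \<in> D then a(z := Suc (a z)) else a)"

lemma sum_count_visit:
  "finite D \<Longrightarrow> sum (count_visit D z a) D = sum a D + (if z \<in> D then 1 else 0)"
  by (simp add: count_visit_def sum.remove)

definition prob_simplex :: "'a set \<Rightarrow> ('a \<Rightarrow> real) set" where
  "prob_simplex D = {h. (\<forall>y. 0 \<le> h y) \<and> sum h D = 1}"

lemma occupation_in_prob_simplex:
  assumes "finite D" "sum a D = t" "t \<ge> 1"
  shows "occupation D t a \<in> prob_simplex D"
proof -
  have "(\<Sum>y\<in>D. occupation D t a y) = real (sum a D) / real t"
    by (simp add: occupation_def sum_divide_distrib)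
  then show ?thesis
    using assms by (simp add: prob_simplex_def occupation_def)
qed

lemma sum_occupation_mult:
  "(\<Sum>y\<in>D. occupation D t a y * g y) = (\<Sum>y\<in>D. real (a y) * g y) / real t"
  by (simp add: occupation_def sum_divide_distrib)

lemma sum_count_visit_mult:
  "finite D \<Longrightarrow> (\<Sum>y\<in>D. real (count_visit D z a y) * g y)
    = (\<Sum>y\<in>D. real (a y) * g y) + (if z \<in> D then g z else 0)"
  by (simp add: count_visit_def sum.remove algebra_simps)

text \<open>In \<open>visits_event D C t n z r a\<close> the walk starts at \<open>z\<close> having already visited \<open>D\<close>
  \<open>a y\<close> times at each \<open>y\<close>; the event is that it makes \<open>r\<close> further visits within \<open>n\<close> steps and
  that the total occupation, normalised by \<open>t\<close>, then lies in \<open>C\<close>.\<close>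
definition visits_event :: "('d::finite \<Rightarrow> int) set \<Rightarrow> (('d \<Rightarrow> int) \<Rightarrow> real) set \<Rightarrow> nat \<Rightarrow> nat \<Rightarrow>
    ('d \<Rightarrow> int) \<Rightarrow> nat \<Rightarrow> (('d \<Rightarrow> int) \<Rightarrow> nat) \<Rightarrow> ('d \<Rightarrow> int) stream set" where
  "visits_event D C t n z r a = {\<omega>. (\<exists>k\<le>n. locD z \<omega> k D = r) \<and>
     occupation D t (\<lambda>y. a y + loc z \<omega> (LEAST k. locD z \<omega> k D = r) y) \<in> C}"

lemma visits_event_0: "r \<ge> 1 \<Longrightarrow> visits_event D C t 0 z r a = {}"
  by (auto simp: visits_event_def)

lemma visits_event_no_visits_left:
  "visits_event D C t n z 0 a = (if occupation D t a \<in> C then UNIV else {})"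
proof -
  have "(LEAST k. locD z \<omega> k D = 0) = 0" for \<omega>
    by (rule Least_eq_0) simp
  then show ?thesis
    by (auto simp: visits_event_def loc_def)
qed

lemma visits_event_mono: "n \<le> n' \<Longrightarrow> visits_event D C t n z r a \<subseteq> visits_event D C t n' z r a"
  unfolding visits_event_def using le_trans by blast

lemma Cons_in_visits_event_Suc:
  assumes "finite D" "r \<ge> 1"
  shows "s ## \<omega> \<in> visits_event D C t (Suc n) z r a \<longleftrightarrow>
    \<omega> \<in> visits_event D C t n (z + s) (r - (if z \<in> D then 1 else 0)) (count_visit D z a)"
proof -
  define r' where "r' = r - (if z \<in> D then 1 else 0)"
  have shift: "locD z (s ## \<omega>) (Suc k) D = r \<longleftrightarrow> locD (z + s) \<omega> k D = r'" for k
    using assms by (auto simp: locD_Suc_Cons r'_def)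
  have not_0: "locD z (s ## \<omega>) 0 D \<noteq> r"
    using assms(2) by simp
  have ex: "(\<exists>k\<le>Suc n. locD z (s ## \<omega>) k D = r) \<longleftrightarrow> (\<exists>k\<le>n. locD (z + s) \<omega> k D = r')"
    unfolding less_Suc_eq_le[symmetric] Ex_less_Suc2 using not_0 shift by simp
  have least: "(LEAST k. locD z (s ## \<omega>) k D = r) = Suc (LEAST k. locD (z + s) \<omega> k D = r')"
    if "locD (z + s) \<omega> k D = r'" for k
    using that shift not_0 by (intro Least_Suc2[where n = "Suc k" and m = k]) auto
  have occ: "occupation D t (\<lambda>y. a y + loc z (s ## \<omega>) (Suc k) y)
      = occupation D t (\<lambda>y. count_visit D z a y + loc (z + s) \<omega> k y)" for k
    by (auto simp: occupation_def count_visit_def loc_Suc_Cons)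
  show ?thesis
  proof (cases "\<exists>k\<le>n. locD (z + s) \<omega> k D = r'")
    case True
    then obtain k where "locD (z + s) \<omega> k D = r'"
      by blast
    show ?thesis
      unfolding visits_event_def mem_Collect_eq ex least[OF \<open>locD (z + s) \<omega> k D = r'\<close>] occ
        r'_def[symmetric] ..
  next
    case False
    then show ?thesis
      unfolding visits_event_def mem_Collect_eq ex r'_def[symmetric] by blast
  qed
qed

lemma occupation_event_eq_Union:
  assumes "t \<ge> 1"
  shows "{\<omega>. tau_fin x \<omega> D t \<and> (\<lambda>y. locTD x \<omega> D t y / real t) \<in> C}
    = (\<Union>n. visits_event D C t n x t (\<lambda>_. 0))"
proof -
  have pos: "1 \<le> k" if "locD x \<omega> k D = t" for \<omega> k
    using that assms by (cases k) auto
  then have tau: "tau x \<omega> D t = (LEAST k. locD x \<omega> k D = t)" for \<omega>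
    unfolding tau_def by metis
  have "(\<lambda>y. locTD x \<omega> D t y / real t) = occupation D t (\<lambda>y. 0 + loc x \<omega> (LEAST k. locD x \<omega> k D = t) y)" for \<omega>
    by (rule ext) (simp add: locTD_def occupation_def tau)
  then show ?thesis
    using pos by (auto simp: tau_fin_def visits_event_def)
qed

lemma locTD_in_prob_simplex:
  assumes "finite D" "t \<ge> 1" "tau_fin x \<omega> D t"
  shows "(\<lambda>y. locTD x \<omega> D t y / real t) \<in> prob_simplex D"
proof -
  have "\<exists>k. k \<ge> 1 \<and> locD x \<omega> k D = t"
    using assms(3) unfolding tau_fin_def by blast
  then have "locD x \<omega> (tau x \<omega> D t) D = t"
    unfolding tau_def by (rule LeastI2_ex) simp
  then have "(\<Sum>y\<in>D. real (loc x \<omega> (tau x \<omega> D t) y)) = real t"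
    unfolding locD_def by (metis of_nat_sum)
  then show ?thesis
    using assms(2) by (simp add: prob_simplex_def locTD_def sum_divide_distrib[symmetric])
qed

section \<open>First-step analysis on the path space\<close>

lemma space_srw_steps [simp]: "space srw_steps = UNIV"
  by (simp add: srw_steps_def space_stream_space)

lemma prob_space_srw_steps: "prob_space (srw_steps :: ('d::finite \<Rightarrow> int) stream measure)"
  unfolding srw_steps_def by (rule prob_space.prob_space_stream_space) (rule prob_space_measure_pmf)

lemma UNIV_in_sets_srw_steps: "UNIV \<in> sets srw_steps"
  using sets.top[of srw_steps] by simp

lemma sets_srw_steps_Cons:
  fixes A :: "('d::finite \<Rightarrow> int) \<Rightarrow> ('d \<Rightarrow> int) stream set"
  assumes "\<And>s. A s \<in> sets srw_steps"
  shows "{\<omega>. stl \<omega> \<in> A (shd \<omega>)} \<in> sets srw_steps"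
proof -
  let ?S = "srw_steps :: ('d \<Rightarrow> int) stream measure"
  have "(\<lambda>\<omega>. stl \<omega> \<in> A s) \<in> measurable ?S (count_space UNIV)" for s
    using assms[of s] by (simp add: srw_steps_def pred_sets2[OF _ measurable_stl])
  moreover have "shd \<in> measurable ?S (count_space UNIV)"
    using measurable_shd[of "measure_pmf (pmf_of_set unit_steps)"]
    by (simp add: srw_steps_def measurable_cong_sets)
  ultimately have "(\<lambda>\<omega>. stl \<omega> \<in> A (shd \<omega>)) \<in> measurable ?S (count_space UNIV)"
    by (rule measurable_compose_countable)
  then show ?thesis
    by (simp add: pred_def)
qed

lemma emeasure_srw_steps_Cons:
  fixes A :: "('d::finite \<Rightarrow> int) \<Rightarrow> ('d \<Rightarrow> int) stream set"
  assumes "\<And>s. A s \<in> sets srw_steps"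
  shows "emeasure srw_steps {\<omega>. stl \<omega> \<in> A (shd \<omega>)}
    = (\<Sum>s\<in>unit_steps. emeasure srw_steps (A s)) / card (unit_steps :: ('d \<Rightarrow> int) set)"
proof -
  let ?S = "srw_steps :: ('d \<Rightarrow> int) stream measure"
  let ?A = "{\<omega>. stl \<omega> \<in> A (shd \<omega>)}"
  have A: "?A \<in> sets ?S"
    by (rule sets_srw_steps_Cons[OF assms])
  have "emeasure ?S ?A = (\<integral>\<^sup>+\<omega>. indicator ?A \<omega> \<partial>?S)"
    using A by simp
  also have "\<dots> = (\<integral>\<^sup>+s. (\<integral>\<^sup>+\<omega>. indicator ?A (s ## \<omega>) \<partial>?S) \<partial>measure_pmf (pmf_of_set unit_steps))"
    unfolding srw_steps_def
    by (rule prob_space.nn_integral_stream_space[OF prob_space_measure_pmf])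
       (use A in \<open>simp add: srw_steps_def\<close>)
  also have "\<dots> = (\<integral>\<^sup>+s. emeasure ?S (A s) \<partial>measure_pmf (pmf_of_set unit_steps))"
  proof (rule nn_integral_cong)
    fix s
    have "(\<lambda>\<omega>. indicator ?A (s ## \<omega>) :: ennreal) = indicator (A s)"
      by (auto simp: indicator_def)
    then show "(\<integral>\<^sup>+\<omega>. indicator ?A (s ## \<omega>) \<partial>?S) = emeasure ?S (A s)"
      using assms[of s] by simp
  qed
  also have "\<dots> = (\<Sum>s\<in>unit_steps. emeasure ?S (A s)) / card (unit_steps :: ('d \<Rightarrow> int) set)"
    by (rule nn_integral_pmf_of_set[OF unit_steps_nonempty finite_unit_steps])
  finally show ?thesis .
qed

lemma emeasure_srw_steps_Cons_le:
  fixes z :: "'d::finite \<Rightarrow> int" and A :: "('d \<Rightarrow> int) \<Rightarrow> ('d \<Rightarrow> int) stream set"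
  assumes "\<And>s. A s \<in> sets srw_steps"
    and "\<And>s. s \<in> unit_steps \<Longrightarrow> emeasure srw_steps (A s) \<le> ennreal (g (z + s))"
    and "\<And>s. s \<in> unit_steps \<Longrightarrow> g (z + s) \<ge> 0"
  shows "emeasure srw_steps {\<omega>. stl \<omega> \<in> A (shd \<omega>)} \<le> ennreal (step_avg g z)"
proof -
  have "emeasure srw_steps {\<omega>. stl \<omega> \<in> A (shd \<omega>)}
      = (\<Sum>s\<in>unit_steps. emeasure srw_steps (A s)) / of_nat (card (unit_steps :: ('d \<Rightarrow> int) set))"
    by (rule emeasure_srw_steps_Cons[OF assms(1)])
  also have "\<dots> \<le> (\<Sum>s\<in>unit_steps. ennreal (g (z + s))) / of_nat (card (unit_steps :: ('d \<Rightarrow> int) set))"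
    by (rule divide_right_mono_ennreal, rule sum_mono, rule assms(2))
  also have "\<dots> = ennreal (\<Sum>s\<in>unit_steps. g (z + s)) / ennreal (card (unit_steps :: ('d \<Rightarrow> int) set))"
    using assms(3) by (simp add: ennreal_of_nat_eq_real_of_nat)
  also have "\<dots> = ennreal (step_avg g z)"
    unfolding step_avg_def
    by (rule divide_ennreal) (use assms(3) card_unit_steps_pos[where 'd='d] in \<open>auto intro: sum_nonneg\<close>)
  finally show ?thesis .
qed

lemma visits_event_Suc:
  assumes "finite D" "r \<ge> 1"
  shows "visits_event D C t (Suc n) z r a = {\<omega>. stl \<omega> \<in>
    visits_event D C t n (z + shd \<omega>) (r - (if z \<in> D then 1 else 0)) (count_visit D z a)}"
  using Cons_in_visits_event_Suc[OF assms] by (metis (no_types, lifting) Collect_cong Collect_mem_eq stream.collapse)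

lemma sets_visits_event:
  assumes "finite D"
  shows "visits_event D C t n z r a \<in> sets srw_steps"
proof (induction n arbitrary: z r a)
  case 0
  then show ?case
    by (cases "r = 0") (simp_all add: visits_event_no_visits_left visits_event_0 UNIV_in_sets_srw_steps)
next
  case (Suc n)
  show ?case
  proof (cases "r = 0")
    case True
    then show ?thesis
      by (simp add: visits_event_no_visits_left UNIV_in_sets_srw_steps)
  next
    case False
    then have "r \<ge> 1"
      by simp
    then show ?thesis
      unfolding visits_event_Suc[OF assms \<open>r \<ge> 1\<close>] by (intro sets_srw_steps_Cons Suc.IH)
  qed
qed

section \<open>An exponential martingale\<close>

lemma emeasure_visits_event_no_visits_left:
  fixes D :: "('d::finite \<Rightarrow> int) set"
  shows "emeasure srw_steps (visits_event D C t n z 0 a) = (if occupation D t a \<in> C then 1 else 0)"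
  using prob_space.emeasure_space_1[OF prob_space_srw_steps[where 'd = 'd]]
  by (simp add: visits_event_no_visits_left)

lemma emeasure_visits_event_le:
  fixes Psi :: "('d::finite \<Rightarrow> int) \<Rightarrow> (('d \<Rightarrow> int) \<Rightarrow> nat) \<Rightarrow> real"
  assumes D: "finite D"
    and Psi_nonneg: "\<And>z a. Psi z a \<ge> 0"
    and Psi_super: "\<And>z a. step_avg (\<lambda>z'. Psi z' (count_visit D z a)) z \<le> Psi z a"
    and Psi_final: "\<And>z a. z \<in> closure_nb D \<Longrightarrow> sum a D = t \<Longrightarrow> occupation D t a \<in> C \<Longrightarrow> 1 \<le> Psi z a"
    and "sum a D + r = t" and "r = 0 \<Longrightarrow> z \<in> closure_nb D"
  shows "emeasure srw_steps (visits_event D C t n z r a) \<le> Psi z a"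
proof -
  have no_visits_left: "emeasure srw_steps (visits_event D C t n z 0 a) \<le> Psi z a"
    if "sum a D = t" "z \<in> closure_nb D" for n z a
    using Psi_final[OF that(2,1)] by (simp add: emeasure_visits_event_no_visits_left)
  show ?thesis
    using assms(5,6)
  proof (induction n arbitrary: z r a)
    case 0
    then show ?case
      using no_visits_left by (cases "r = 0") (simp_all add: visits_event_0)
  next
    case (Suc n)
    show ?case
    proof (cases "r = 0")
      case True
      then show ?thesis using Suc.prems no_visits_left by simp
    next
      case False
      then have r: "r \<ge> 1"
        by simp
      have "emeasure srw_steps (visits_event D C t (Suc n) z r a)
          \<le> ennreal (step_avg (\<lambda>z'. Psi z' (count_visit D z a)) z)"
        unfolding visits_event_Suc[OF D r]
      proof (intro emeasure_srw_steps_Cons_le sets_visits_event[OF D] Psi_nonneg Suc.IH)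
        show "sum (count_visit D z a) D + (r - (if z \<in> D then 1 else 0)) = t"
          using Suc.prems(1) False by (simp add: sum_count_visit[OF D])
        show "z + s \<in> closure_nb D" if "r - (if z \<in> D then 1 else 0) = 0" "s \<in> unit_steps" for s
          using that False by (intro add_unit_step_in_closure_nb) (auto split: if_splits)
      qed
      also have "\<dots> \<le> ennreal (Psi z a)"
        by (rule ennreal_leI) (rule Psi_super)
      finally show ?thesis .
    qed
  qed
qed

lemma measure_occupation_event_le:
  fixes Psi :: "('d::finite \<Rightarrow> int) \<Rightarrow> (('d \<Rightarrow> int) \<Rightarrow> nat) \<Rightarrow> real"
  assumes D: "finite D" and t: "t \<ge> 1"
    and Psi_nonneg: "\<And>z a. Psi z a \<ge> 0"
    and Psi_super: "\<And>z a. step_avg (\<lambda>z'. Psi z' (count_visit D z a)) z \<le> Psi z a"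
    and Psi_final: "\<And>z a. z \<in> closure_nb D \<Longrightarrow> sum a D = t \<Longrightarrow> occupation D t a \<in> C \<Longrightarrow> 1 \<le> Psi z a"
  shows "measure srw_steps {\<omega>. tau_fin x \<omega> D t \<and> (\<lambda>y. locTD x \<omega> D t y / real t) \<in> C} \<le> Psi x (\<lambda>_. 0)"
proof -
  have "emeasure srw_steps (\<Union>n. visits_event D C t n x t (\<lambda>_. 0))
      = (SUP n. emeasure srw_steps (visits_event D C t n x t (\<lambda>_. 0)))"
    by (rule SUP_emeasure_incseq[symmetric])
       (auto simp: sets_visits_event[OF D] incseq_def visits_event_mono)
  also have "\<dots> \<le> ennreal (Psi x (\<lambda>_. 0))"
    using t by (intro SUP_least emeasure_visits_event_le[OF D Psi_nonneg Psi_super Psi_final]) simp_all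
  finally show ?thesis
    unfolding occupation_event_eq_Union[OF t] measure_def by (simp add: enn2real_leI Psi_nonneg)
qed

definition exp_weight :: "('d::finite \<Rightarrow> int) set \<Rightarrow> (('d \<Rightarrow> int) \<Rightarrow> real) \<Rightarrow> (('d \<Rightarrow> int) \<Rightarrow> nat) \<Rightarrow> real"
  where "exp_weight D u a = exp (\<Sum>y\<in>D. real (a y) * ln (u y / step_avg u y))"

text \<open>If \<open>u\<close> is harmonic off \<open>D\<close>, then \<open>u(S\<^sub>k)\<close> times the exponential weight of the visits
  to \<open>D\<close> before time \<open>k\<close> is a martingale.\<close>
lemma exp_weight_count_visit:
  fixes u :: "('d::finite \<Rightarrow> int) \<Rightarrow> real"
  assumes "finite D"
    and "\<And>z. z \<notin> D \<Longrightarrow> step_avg u z = u z"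
    and "\<And>y. y \<in> D \<Longrightarrow> u y > 0" "\<And>y. y \<in> D \<Longrightarrow> step_avg u y > 0"
  shows "exp_weight D u (count_visit D z a) * step_avg u z = exp_weight D u a * u z"
proof (cases "z \<in> D")
  case True
  have "exp (ln (u z / step_avg u z)) * step_avg u z = u z"
    using assms(3,4)[OF True] by simp
  then show ?thesis
    using True by (simp add: exp_weight_def sum_count_visit_mult[OF assms(1)] exp_add mult.assoc)
next
  case False
  then show ?thesis
    by (simp add: exp_weight_def count_visit_def assms(2))
qed

lemma exp_weight_ge:
  assumes "finite D" "t \<ge> 1" "sum a D = t"
    and "m \<le> (\<Sum>y\<in>D. occupation D t a y * ln (u y / step_avg u y))"
  shows "exp (real t * m) \<le> exp_weight D u a"
proof -
  have "real t * m \<le> (\<Sum>y\<in>D. real (a y) * ln (u y / step_avg u y))"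
    using assms(2,4) by (simp add: sum_occupation_mult field_simps)
  then show ?thesis
    by (simp add: exp_weight_def)
qed

lemma measure_occupation_event_le_exp:
  fixes u :: "('d::finite \<Rightarrow> int) \<Rightarrow> real"
  assumes D: "finite D" and t: "t \<ge> 1"
    and u_harmonic: "\<And>z. z \<notin> D \<Longrightarrow> step_avg u z = u z"
    and u_nonneg: "\<And>z. u z \<ge> 0" and u_pos: "\<And>z. z \<in> closure_nb D \<Longrightarrow> u z > 0"
    and x: "x \<in> closure_nb D" and x_min: "\<And>z. z \<in> closure_nb D \<Longrightarrow> u x \<le> u z"
    and m_le: "\<And>l. l \<in> C \<inter> prob_simplex D \<Longrightarrow> m \<le> (\<Sum>y\<in>D. l y * ln (u y / step_avg u y))"
  shows "measure srw_steps {\<omega>. tau_fin x \<omega> D t \<and> (\<lambda>y. locTD x \<omega> D t y / real t) \<in> C}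
    \<le> exp (- real t * m)"
proof -
  define Psi where "Psi z a = exp (- real t * m) / u x * (exp_weight D u a * u z)" for z a
  have "measure srw_steps {\<omega>. tau_fin x \<omega> D t \<and> (\<lambda>y. locTD x \<omega> D t y / real t) \<in> C}
      \<le> Psi x (\<lambda>_. 0)"
  proof (rule measure_occupation_event_le[OF D t])
    show "Psi z a \<ge> 0" for z a
      using u_pos[OF x] u_nonneg unfolding Psi_def exp_weight_def
      by (intro mult_nonneg_nonneg divide_nonneg_pos) auto
    have "step_avg u y > 0" if "y \<in> D" for y
      using that by (intro step_avg_pos u_pos add_unit_step_in_closure_nb)
    then show "step_avg (\<lambda>z'. Psi z' (count_visit D z a)) z \<le> Psi z a" for z a
      using exp_weight_count_visit[OF D u_harmonic, of z a] u_pos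
      unfolding Psi_def step_avg_cmult by (simp add: closure_nb_def)
    show "1 \<le> Psi z a" if z: "z \<in> closure_nb D" and a: "sum a D = t" "occupation D t a \<in> C" for z a
    proof -
      have "exp (real t * m) \<le> exp_weight D u a"
        using a occupation_in_prob_simplex[OF D a(1) t] by (intro exp_weight_ge[OF D t a(1)] m_le) simp
      then have "1 \<le> exp (- real t * m) * exp_weight D u a"
        by (simp add: exp_minus field_simps)
      moreover have "1 \<le> u z / u x"
        using x_min[OF z] u_pos[OF x] by simp
      ultimately have "1 * 1 \<le> exp (- real t * m) * exp_weight D u a * (u z / u x)"
        by (intro mult_mono) auto
      then show ?thesis
        by (simp add: Psi_def field_simps)
    qed
  qed
  also have "Psi x (\<lambda>_. 0) = exp (- real t * m)"
    using u_pos[OF x] by (simp add: Psi_def exp_weight_def)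
  finally show ?thesis .
qed

lemma exists_start_measure_le:
  fixes f :: "('d::finite \<Rightarrow> int) \<Rightarrow> real"
  assumes D: "finite D" "D \<noteq> {}" and t: "t \<ge> 1"
    and f_pos: "\<And>y. y \<in> D \<Longrightarrow> f y > 0"
    and m_le: "\<And>l. l \<in> C \<inter> prob_simplex D \<Longrightarrow>
      m \<le> (\<Sum>y\<in>D. l y * ln (f y / (\<Sum>y'\<in>D. trace_kernel D y y' * f y')))"
  shows "\<exists>x\<in>closure_nb D. measure srw_steps
    {\<omega>. tau_fin x \<omega> D t \<and> (\<lambda>y. locTD x \<omega> D t y / real t) \<in> C} \<le> exp (- real t * m)"
proof -
  let ?u = "harm_ext D f"
  have "closure_nb D \<noteq> {}"
    using D(2) by (auto simp: closure_nb_def)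
  then obtain x where x: "x \<in> closure_nb D" and x_min: "\<And>z. z \<in> closure_nb D \<Longrightarrow> ?u x \<le> ?u z"
    using arg_min_if_finite[OF finite_closure_nb[OF D(1)], of ?u] by (metis not_le)
  have "(\<Sum>y\<in>D. l y * ln (f y / (\<Sum>y'\<in>D. trace_kernel D y y' * f y')))
      = (\<Sum>y\<in>D. l y * ln (?u y / step_avg ?u y))" for l
    using D(1) by (simp add: harm_ext_in step_avg_harm_ext cong: sum.cong)
  then have "measure srw_steps {\<omega>. tau_fin x \<omega> D t \<and> (\<lambda>y. locTD x \<omega> D t y / real t) \<in> C}
      \<le> exp (- real t * m)"
    using D(1) f_pos m_le x x_min
    by (intro measure_occupation_event_le_exp[where u = ?u and x = x, OF D(1) t])
       (auto intro: harm_ext_harmonic harm_ext_nonneg harm_ext_pos less_imp_le)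
  then show ?thesis
    using x by blast
qed

section \<open>A variational problem on the simplex\<close>

lemma pointwise_convergent_subseq:
  fixes X :: "nat \<Rightarrow> 'a \<Rightarrow> real"
  assumes "finite S" "\<And>n y. y \<in> S \<Longrightarrow> \<bar>X n y\<bar> \<le> B"
  shows "\<exists>r. strict_mono r \<and> (\<forall>y\<in>S. convergent (\<lambda>n. X (r n) y))"
  using assms
proof (induction S rule: finite_induct)
  case empty
  show ?case
    by (rule exI[of _ id]) (simp add: strict_mono_def)
next
  case (insert y S)
  then obtain r where r: "strict_mono r" "\<forall>y\<in>S. convergent (\<lambda>n. X (r n) y)"
    by auto
  obtain r' where r': "strict_mono r'" "monoseq (\<lambda>n. X (r (r' n)) y)"
    using seq_monosub[of "\<lambda>n. X (r n) y"] by (auto simp: o_def)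
  have "Bseq (\<lambda>n. X (r (r' n)) y)"
    by (rule BseqI'[where K = B]) (use insert.prems in simp)
  then have "convergent (\<lambda>n. X (r (r' n)) y)"
    using r'(2) by (rule Bseq_monoseq_convergent)
  moreover have "convergent (\<lambda>n. X (r (r' n)) y')" if "y' \<in> S" for y'
    using convergent_subseq_convergent[OF r(2)[rule_format, OF that] r'(1)] by (simp add: o_def)
  moreover have "strict_mono (\<lambda>n. r (r' n))"
    using strict_mono_o[OF r(1) r'(1)] by (simp add: o_def)
  ultimately show ?case
    by (intro exI[of _ "\<lambda>n. r (r' n)"]) auto
qed

lemma prob_simplex_le_1: "finite D \<Longrightarrow> h \<in> prob_simplex D \<Longrightarrow> y \<in> D \<Longrightarrow> h y \<le> 1"
  unfolding prob_simplex_def using member_le_sum[of y D h] by auto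

lemma closed_simplex_seq_compact:
  fixes X :: "nat \<Rightarrow> 'a \<Rightarrow> real"
  assumes D: "finite D" and C: "l1_closed C D" and X: "\<And>n. X n \<in> C \<inter> prob_simplex D"
  shows "\<exists>r g. strict_mono r \<and> g \<in> C \<inter> prob_simplex D \<and> (\<forall>y\<in>D. (\<lambda>n. X (r n) y) \<longlonglongrightarrow> g y)"
proof -
  have bound: "\<bar>X n y\<bar> \<le> 1" if "y \<in> D" for n y
    using X[of n] prob_simplex_le_1[OF D _ that, of "X n"] by (auto simp: prob_simplex_def)
  obtain r where r: "strict_mono r" "\<forall>y\<in>D. convergent (\<lambda>n. X (r n) y)"
    using pointwise_convergent_subseq[OF D, of X 1] bound by blast
  define g where "g y = (if y \<in> D then lim (\<lambda>n. X (r n) y) else 0)" for y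
  have lim: "\<forall>y\<in>D. (\<lambda>n. X (r n) y) \<longlonglongrightarrow> g y"
    using r(2) by (auto simp: g_def convergent_LIMSEQ_iff)
  have "(\<lambda>n. \<Sum>y\<in>D. \<bar>X (r n) y - g y\<bar>) \<longlonglongrightarrow> (\<Sum>y\<in>D. \<bar>g y - g y\<bar>)"
    by (intro tendsto_intros) (use lim in auto)
  then have "(\<lambda>n. \<Sum>y\<in>D. \<bar>X (r n) y - g y\<bar>) \<longlonglongrightarrow> 0"
    by simp
  moreover have "\<forall>n. X (r n) \<in> C" and "\<forall>y. y \<notin> D \<longrightarrow> g y = 0"
    using X by (auto simp: g_def)
  ultimately have "g \<in> C"
    using C unfolding l1_closed_def by (elim allE[of _ "\<lambda>n. X (r n)"] allE[of _ g]) blast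
  moreover have "g y \<ge> 0" for y
    using lim X by (cases "y \<in> D") (auto simp: g_def prob_simplex_def intro: LIMSEQ_le_const)
  moreover have "(\<lambda>n. \<Sum>y\<in>D. X (r n) y) \<longlonglongrightarrow> (\<Sum>y\<in>D. g y)"
    by (intro tendsto_sum) (use lim in auto)
  then have "(\<Sum>y\<in>D. g y) = 1"
    using X by (simp add: prob_simplex_def LIMSEQ_const_iff)
  ultimately show ?thesis
    using r(1) lim by (auto simp: prob_simplex_def)
qed

lemma exists_max_on_closed_simplex:
  fixes F :: "('a \<Rightarrow> real) \<Rightarrow> real"
  assumes D: "finite D" and C: "l1_closed C D" and ne: "C \<inter> prob_simplex D \<noteq> {}"
    and F_cont: "\<And>X g. \<forall>y\<in>D. (\<lambda>n. X n y) \<longlonglongrightarrow> g y \<Longrightarrow> (\<lambda>n. F (X n)) \<longlonglongrightarrow> F g"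
    and F_bdd: "\<And>h. h \<in> C \<inter> prob_simplex D \<Longrightarrow> F h \<le> B"
  shows "\<exists>g\<in>C \<inter> prob_simplex D. \<forall>h\<in>C \<inter> prob_simplex D. F h \<le> F g"
proof -
  let ?K = "C \<inter> prob_simplex D"
  have bdd: "bdd_above (F ` ?K)"
    using F_bdd by (intro bdd_aboveI[where M = B]) auto
  then have "Sup (F ` ?K) \<in> closure (F ` ?K)"
    using ne by (intro closure_contains_Sup) auto
  then obtain v where v_in: "\<And>n. v n \<in> F ` ?K" and v: "v \<longlonglongrightarrow> Sup (F ` ?K)"
    unfolding closure_sequential by blast
  have "\<forall>n. \<exists>h. h \<in> ?K \<and> F h = v n"
  proof
    fix n
    from v_in[of n] obtain h where "h \<in> ?K" "v n = F h"
      by blast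
    then show "\<exists>h. h \<in> ?K \<and> F h = v n"
      by auto
  qed
  then obtain X where X: "\<And>n. X n \<in> ?K" and FX: "\<And>n. F (X n) = v n"
    by (auto dest!: choice)
  obtain r g where r: "strict_mono r" and g: "g \<in> ?K" and lim: "\<forall>y\<in>D. (\<lambda>n. X (r n) y) \<longlonglongrightarrow> g y"
    using closed_simplex_seq_compact[OF D C, where X = X] X by blast
  have "(\<lambda>n. F (X (r n))) \<longlonglongrightarrow> Sup (F ` ?K)"
    using LIMSEQ_subseq_LIMSEQ[OF v r] by (simp add: FX o_def)
  then have "F g = Sup (F ` ?K)"
    using F_cont[OF lim] LIMSEQ_unique by blast
  then have "F h \<le> F g" if "h \<in> ?K" for h
    using bdd that by (simp add: cSup_upper)
  with g show ?thesis
    by blast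
qed

definition sqrt_form :: "('a \<Rightarrow> 'a \<Rightarrow> real) \<Rightarrow> 'a set \<Rightarrow> real \<Rightarrow> ('a \<Rightarrow> real) \<Rightarrow> real" where
  "sqrt_form q D \<delta> h = (\<Sum>y\<in>D. \<Sum>y'\<in>D. q y y' * (sqrt (h y + \<delta>) * sqrt (h y' + \<delta>)))"

lemma sqrt_form_bounded:
  assumes "finite D" "\<delta> > 0" "\<And>y y'. y \<in> D \<Longrightarrow> y' \<in> D \<Longrightarrow> q y y' \<ge> 0" "h \<in> prob_simplex D"
  shows "sqrt_form q D \<delta> h \<le> (\<Sum>y\<in>D. \<Sum>y'\<in>D. q y y' * (1 + \<delta>))"
proof -
  have "sqrt (h y + \<delta>) * sqrt (h y' + \<delta>) \<le> sqrt (1 + \<delta>) * sqrt (1 + \<delta>)" if "y \<in> D" "y' \<in> D" for y y'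
    using assms prob_simplex_le_1[OF assms(1,4) that(1)] prob_simplex_le_1[OF assms(1,4) that(2)]
    by (intro mult_mono) (auto simp: prob_simplex_def)
  then show ?thesis
    unfolding sqrt_form_def using assms by (intro sum_mono mult_left_mono) auto
qed

lemma sqrt_form_continuous:
  "\<forall>y\<in>D. (\<lambda>n. X n y) \<longlonglongrightarrow> g y \<Longrightarrow> (\<lambda>n. sqrt_form q D \<delta> (X n)) \<longlonglongrightarrow> sqrt_form q D \<delta> g"
  unfolding sqrt_form_def by (intro tendsto_intros) auto

lemma has_real_derivative_sqrt_line:
  assumes "a + e > 0"
  shows "((\<lambda>s. sqrt (a + s * b + e)) has_real_derivative b / (2 * sqrt (a + e))) (at 0)"
  using assms by (auto intro!: derivative_eq_intros simp: field_simps)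

lemma has_derivative_sqrt_form_line:
  fixes q :: "'a \<Rightarrow> 'a \<Rightarrow> real"
  assumes D: "finite D" and q_commute: "\<And>y y'. y \<in> D \<Longrightarrow> y' \<in> D \<Longrightarrow> q y y' = q y' y"
    and pos: "\<And>y. y \<in> D \<Longrightarrow> g y + \<delta> > 0"
  shows "((\<lambda>s. sqrt_form q D \<delta> (\<lambda>y. g y + s * b y)) has_real_derivative
    (\<Sum>y\<in>D. b y / sqrt (g y + \<delta>) * (\<Sum>y'\<in>D. q y y' * sqrt (g y' + \<delta>)))) (at 0)"
proof -
  let ?f = "\<lambda>y. sqrt (g y + \<delta>)"
  have "((\<lambda>s. sqrt_form q D \<delta> (\<lambda>y. g y + s * b y)) has_real_derivative
      (\<Sum>y\<in>D. \<Sum>y'\<in>D. q y y' * (sqrt (g y + 0 * b y + \<delta>) * (b y' / (2 * ?f y'))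
        + b y / (2 * ?f y) * sqrt (g y' + 0 * b y' + \<delta>)))) (at 0)"
    unfolding sqrt_form_def
    by (intro DERIV_sum DERIV_cmult DERIV_mult' has_real_derivative_sqrt_line pos)
  moreover have "(\<Sum>y\<in>D. \<Sum>y'\<in>D. q y y' * (?f y * (b y' / (2 * ?f y')))) =
      (\<Sum>y\<in>D. \<Sum>y'\<in>D. q y y' * (b y / (2 * ?f y) * ?f y'))"
    by (subst sum.swap) (auto intro!: sum.cong simp: q_commute)
  ultimately show ?thesis
    by (simp add: sum.distrib distrib_left sum_distrib_left sum_divide_distrib field_simps)
qed

lemma convex_comb_in_prob_simplex:
  assumes "l1_convex C" "l \<in> C \<inter> prob_simplex D" "g \<in> C \<inter> prob_simplex D" "0 \<le> s" "s \<le> 1"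
  shows "(\<lambda>y. s * l y + (1 - s) * g y) \<in> C \<inter> prob_simplex D"
proof -
  have "(\<Sum>y\<in>D. s * l y + (1 - s) * g y) = s * sum l D + (1 - s) * sum g D"
    by (simp add: sum.distrib sum_distrib_left)
  then show ?thesis
    using assms by (auto simp: l1_convex_def prob_simplex_def)
qed

lemma sqrt_form_max_stationary:
  fixes q :: "'a \<Rightarrow> 'a \<Rightarrow> real"
  assumes D: "finite D" and C: "l1_convex C"
    and q_commute: "\<And>y y'. y \<in> D \<Longrightarrow> y' \<in> D \<Longrightarrow> q y y' = q y' y" and \<delta>: "\<delta> > 0"
    and g: "g \<in> C \<inter> prob_simplex D"
    and g_max: "\<And>h. h \<in> C \<inter> prob_simplex D \<Longrightarrow> sqrt_form q D \<delta> h \<le> sqrt_form q D \<delta> g"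
    and l: "l \<in> C \<inter> prob_simplex D"
  shows "(\<Sum>y\<in>D. (l y - g y) / sqrt (g y + \<delta>) * (\<Sum>y'\<in>D. q y y' * sqrt (g y' + \<delta>))) \<le> 0"
proof (rule ccontr)
  define F where "F s = sqrt_form q D \<delta> (\<lambda>y. g y + s * (l y - g y))" for s
  assume "\<not> ?thesis"
  then have pos: "(\<Sum>y\<in>D. (l y - g y) / sqrt (g y + \<delta>) * (\<Sum>y'\<in>D. q y y' * sqrt (g y' + \<delta>))) > 0"
    by simp
  have g_pos: "g y + \<delta> > 0" if "y \<in> D" for y
    using g \<delta> by (simp add: prob_simplex_def add_nonneg_pos)
  have "(F has_real_derivative
      (\<Sum>y\<in>D. (l y - g y) / sqrt (g y + \<delta>) * (\<Sum>y'\<in>D. q y y' * sqrt (g y' + \<delta>)))) (at 0)"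
    unfolding F_def by (rule has_derivative_sqrt_form_line[OF D q_commute g_pos])
  from DERIV_pos_inc_right[OF this pos] obtain d where d: "d > 0" "\<And>s. s > 0 \<Longrightarrow> s < d \<Longrightarrow> F 0 < F s"
    by auto
  define s where "s = min (d / 2) 1"
  have s: "0 < s" "s < d" "s \<le> 1"
    using d(1) by (auto simp: s_def)
  have "sqrt_form q D \<delta> (\<lambda>y. s * l y + (1 - s) * g y) \<le> sqrt_form q D \<delta> g"
    using s by (intro g_max convex_comb_in_prob_simplex[OF C l g]) auto
  moreover have "F s = sqrt_form q D \<delta> (\<lambda>y. s * l y + (1 - s) * g y)"
    unfolding F_def by (rule arg_cong[where f = "sqrt_form q D \<delta>"]) (auto simp: algebra_simps)
  moreover have "F 0 = sqrt_form q D \<delta> g"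
    by (simp add: F_def)
  ultimately show False
    using d(2)[OF s(1,2)] by simp
qed

lemma sum_log_ratio_ge:
  assumes D: "finite D" and \<delta>: "\<delta> > 0" and g: "g \<in> prob_simplex D" and l: "l \<in> prob_simplex D"
    and Qf_pos: "\<And>y. y \<in> D \<Longrightarrow> Qf y > 0"
    and stationary: "(\<Sum>y\<in>D. (l y - g y) / sqrt (g y + \<delta>) * Qf y) \<le> 0"
  shows "1 - (\<Sum>y\<in>D. sqrt (g y + \<delta>) * Qf y) \<le> (\<Sum>y\<in>D. l y * ln (sqrt (g y + \<delta>) / Qf y))"
proof -
  define f where "f y = sqrt (g y + \<delta>)" for y
  have f_pos: "f y > 0" for y
    using g \<delta> by (auto simp: f_def prob_simplex_def add_nonneg_pos)
  have "1 - (\<Sum>y\<in>D. l y * Qf y / f y) = (\<Sum>y\<in>D. l y * (1 - Qf y / f y))"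
    using l by (simp add: prob_simplex_def algebra_simps sum_subtractf)
  also have "\<dots> \<le> (\<Sum>y\<in>D. l y * ln (f y / Qf y))"
  proof (intro sum_mono mult_left_mono)
    fix y
    assume "y \<in> D"
    then have "ln (Qf y / f y) \<le> Qf y / f y - 1"
      using f_pos Qf_pos by (intro ln_le_minus_one) simp
    moreover have "ln (f y / Qf y) = - ln (Qf y / f y)"
      using f_pos Qf_pos \<open>y \<in> D\<close> by (simp add: ln_div)
    ultimately show "1 - Qf y / f y \<le> ln (f y / Qf y)"
      by simp
  qed (use l in \<open>simp add: prob_simplex_def\<close>)
  finally have "1 - (\<Sum>y\<in>D. l y * Qf y / f y) \<le> (\<Sum>y\<in>D. l y * ln (f y / Qf y))" .
  moreover have "(\<Sum>y\<in>D. l y * Qf y / f y) \<le> (\<Sum>y\<in>D. g y * Qf y / f y)"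
  proof -
    have "(\<Sum>y\<in>D. (l y - g y) / f y * Qf y) = (\<Sum>y\<in>D. l y * Qf y / f y) - (\<Sum>y\<in>D. g y * Qf y / f y)"
      unfolding sum_subtractf[symmetric] using f_pos
      by (intro sum.cong) (auto simp: diff_divide_distrib left_diff_distrib)
    then show ?thesis
      using stationary unfolding f_def by linarith
  qed
  moreover have "(\<Sum>y\<in>D. g y * Qf y / f y) \<le> (\<Sum>y\<in>D. (g y + \<delta>) * Qf y / f y)"
    using f_pos Qf_pos \<delta> by (intro sum_mono divide_right_mono mult_right_mono) (auto intro: less_imp_le)
  moreover have "(g y + \<delta>) * Qf y / f y = f y * Qf y" for y
    using f_pos[of y] g \<delta> unfolding f_def
    by (auto simp: prob_simplex_def field_simps add_nonneg_pos less_imp_le)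
  ultimately show ?thesis
    unfolding f_def by simp
qed

lemma exists_log_ratio_bound:
  fixes q :: "'a \<Rightarrow> 'a \<Rightarrow> real"
  assumes D: "finite D" and C: "l1_closed C D" "l1_convex C" "C \<inter> prob_simplex D \<noteq> {}"
    and q_commute: "\<And>y y'. y \<in> D \<Longrightarrow> y' \<in> D \<Longrightarrow> q y y' = q y' y"
    and q_nonneg: "\<And>y y'. y \<in> D \<Longrightarrow> y' \<in> D \<Longrightarrow> q y y' \<ge> 0"
    and q_pos: "\<And>f y. y \<in> D \<Longrightarrow> (\<And>y. y \<in> D \<Longrightarrow> f y > 0) \<Longrightarrow> (\<Sum>y'\<in>D. q y y' * f y') > 0"
    and \<delta>: "\<delta> > 0"
  shows "\<exists>g\<in>C \<inter> prob_simplex D. \<exists>f. (\<forall>y\<in>D. f y > 0) \<and> (\<forall>l\<in>C \<inter> prob_simplex D.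
    1 - sqrt_form q D \<delta> g \<le> (\<Sum>y\<in>D. l y * ln (f y / (\<Sum>y'\<in>D. q y y' * f y'))))"
proof -
  have "\<exists>g\<in>C \<inter> prob_simplex D. \<forall>h\<in>C \<inter> prob_simplex D. sqrt_form q D \<delta> h \<le> sqrt_form q D \<delta> g"
    by (rule exists_max_on_closed_simplex[OF D C(1,3)])
       (auto intro: sqrt_form_continuous sqrt_form_bounded[OF D \<delta> q_nonneg])
  then obtain g where g: "g \<in> C \<inter> prob_simplex D"
    and g_max: "\<And>h. h \<in> C \<inter> prob_simplex D \<Longrightarrow> sqrt_form q D \<delta> h \<le> sqrt_form q D \<delta> g"
    by blast
  define f where "f y = sqrt (g y + \<delta>)" for y
  have f_pos: "f y > 0" for y
    using g \<delta> by (auto simp: f_def prob_simplex_def add_nonneg_pos)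
  have "1 - sqrt_form q D \<delta> g \<le> (\<Sum>y\<in>D. l y * ln (f y / (\<Sum>y'\<in>D. q y y' * f y')))"
    if l: "l \<in> C \<inter> prob_simplex D" for l
  proof -
    have Qf_pos: "(\<Sum>y'\<in>D. q y y' * f y') > 0" if "y \<in> D" for y
      using q_pos[OF that] f_pos by blast
    have "(\<Sum>y\<in>D. (l y - g y) / f y * (\<Sum>y'\<in>D. q y y' * f y')) \<le> 0"
      unfolding f_def by (rule sqrt_form_max_stationary[OF D C(2) q_commute \<delta> g g_max l])
    then have "1 - (\<Sum>y\<in>D. f y * (\<Sum>y'\<in>D. q y y' * f y'))
        \<le> (\<Sum>y\<in>D. l y * ln (f y / (\<Sum>y'\<in>D. q y y' * f y')))"
      unfolding f_def using g l Qf_pos[unfolded f_def] by (intro sum_log_ratio_ge[OF D \<delta>]) auto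
    moreover have "sqrt_form q D \<delta> g = (\<Sum>y\<in>D. f y * (\<Sum>y'\<in>D. q y y' * f y'))"
      by (simp add: sqrt_form_def f_def sum_distrib_left algebra_simps)
    ultimately show ?thesis
      by simp
  qed
  then show ?thesis
    using g f_pos by blast
qed

lemma sqrt_mult_sqrt_add_le:
  fixes a b \<delta> :: real
  assumes "0 \<le> a" "a \<le> 1" "0 \<le> b" "b \<le> 1" "\<delta> > 0"
  shows "sqrt (a + \<delta>) * sqrt (b + \<delta>) \<le> sqrt a * sqrt b + (2 * sqrt \<delta> + \<delta>)"
proof -
  have "sqrt (a + \<delta>) * sqrt (b + \<delta>) \<le> (sqrt a + sqrt \<delta>) * (sqrt b + sqrt \<delta>)"
    using assms by (intro mult_mono sqrt_add_le_add_sqrt) auto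
  also have "\<dots> = sqrt a * sqrt b + sqrt \<delta> * (sqrt a + sqrt b) + \<delta>"
    using assms by (simp add: algebra_simps)
  also have "sqrt \<delta> * (sqrt a + sqrt b) \<le> sqrt \<delta> * 2"
  proof -
    have "sqrt a \<le> 1" "sqrt b \<le> 1"
      using assms by simp_all
    then have "sqrt a + sqrt b \<le> 2"
      by linarith
    then show ?thesis
      by (rule mult_left_mono) (use assms in simp)
  qed
  finally show ?thesis
    by simp
qed

lemma sqrt_form_le_add:
  assumes D: "finite D" and \<delta>: "\<delta> > 0" and g: "g \<in> prob_simplex D"
    and q_nonneg: "\<And>y y'. y \<in> D \<Longrightarrow> y' \<in> D \<Longrightarrow> q y y' \<ge> 0"
    and q_rowsum: "\<And>y. y \<in> D \<Longrightarrow> (\<Sum>y'\<in>D. q y y') \<le> 1"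
  shows "sqrt_form q D \<delta> g \<le> sqrt_form q D 0 g + (2 * sqrt \<delta> + \<delta>) * card D"
proof -
  have "sqrt_form q D \<delta> g \<le> (\<Sum>y\<in>D. \<Sum>y'\<in>D. q y y' * (sqrt (g y) * sqrt (g y') + (2 * sqrt \<delta> + \<delta>)))"
    unfolding sqrt_form_def using g \<delta> q_nonneg prob_simplex_le_1[OF D g]
    by (intro sum_mono mult_left_mono sqrt_mult_sqrt_add_le) (auto simp: prob_simplex_def)
  also have "\<dots> = sqrt_form q D 0 g + (\<Sum>y\<in>D. (\<Sum>y'\<in>D. q y y') * (2 * sqrt \<delta> + \<delta>))"
    by (simp add: sqrt_form_def distrib_left sum.distrib sum_distrib_right)
  also have "(\<Sum>y\<in>D. (\<Sum>y'\<in>D. q y y') * (2 * sqrt \<delta> + \<delta>)) \<le> (\<Sum>y\<in>D. 1 * (2 * sqrt \<delta> + \<delta>))"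
    using \<delta> by (intro sum_mono mult_right_mono q_rowsum) auto
  finally show ?thesis
    by (simp add: mult.commute)
qed

section \<open>The Dirichlet form\<close>

lemma energy_nonneg: "energy f D \<ge> 0"
  unfolding energy_def by (intro mult_nonneg_nonneg sum_nonneg) (auto simp: case_prod_beta)

lemma energy_eq_sum_adj:
  fixes e :: "('d::finite \<Rightarrow> int) \<Rightarrow> real"
  assumes "finite D"
  shows "energy e D = (\<Sum>y\<in>D. \<Sum>y'\<in>D. (if adj y y' then (e y - e y')\<^sup>2 else 0) / (2 * real CARD('d)))"
proof -
  have "{(y, y'). y \<in> D \<and> y' \<in> D \<and> adj y y'} = {p \<in> D \<times> D. adj (fst p) (snd p)}"
    by auto
  then have "(\<Sum>(y, y')\<in>{(y, y'). y \<in> D \<and> y' \<in> D \<and> adj y y'}. (e y - e y')\<^sup>2)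
      = (\<Sum>y\<in>D. \<Sum>y'\<in>D. if adj y y' then (e y - e y')\<^sup>2 else 0)"
    using assms by (simp add: sum.inter_filter sum.cartesian_product case_prod_beta)
  then show ?thesis
    by (simp add: energy_def sum_divide_distrib)
qed

lemma sum_kernel_sq_diff:
  fixes q :: "'a \<Rightarrow> 'a \<Rightarrow> real"
  assumes "\<And>y y'. y \<in> D \<Longrightarrow> y' \<in> D \<Longrightarrow> q y y' = q y' y"
  shows "(\<Sum>y\<in>D. \<Sum>y'\<in>D. q y y' * (e y - e y')\<^sup>2)
    = 2 * (\<Sum>y\<in>D. (\<Sum>y'\<in>D. q y y') * (e y)\<^sup>2) - 2 * (\<Sum>y\<in>D. \<Sum>y'\<in>D. q y y' * (e y * e y'))"
proof -
  have "(\<Sum>y\<in>D. \<Sum>y'\<in>D. q y y' * (e y')\<^sup>2) = (\<Sum>y\<in>D. \<Sum>y'\<in>D. q y y' * (e y)\<^sup>2)"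
    by (subst sum.swap) (auto intro!: sum.cong simp: assms)
  then show ?thesis
    by (simp add: power2_diff algebra_simps sum.distrib sum_subtractf sum_distrib_left sum_distrib_right)
qed

lemma energy_le_sqrt_form:
  fixes q :: "('d::finite \<Rightarrow> int) \<Rightarrow> ('d \<Rightarrow> int) \<Rightarrow> real"
  assumes D: "finite D" and g: "g \<in> prob_simplex D"
    and q_commute: "\<And>y y'. y \<in> D \<Longrightarrow> y' \<in> D \<Longrightarrow> q y y' = q y' y"
    and q_nonneg: "\<And>y y'. y \<in> D \<Longrightarrow> y' \<in> D \<Longrightarrow> q y y' \<ge> 0"
    and q_rowsum: "\<And>y. y \<in> D \<Longrightarrow> (\<Sum>y'\<in>D. q y y') \<le> 1"
    and q_adj: "\<And>y y'. y \<in> D \<Longrightarrow> y' \<in> D \<Longrightarrow> adj y y' \<Longrightarrow> 1 / (2 * real CARD('d)) \<le> q y y'"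
  shows "energy (\<lambda>y. sqrt (g y)) D / 2 \<le> 1 - sqrt_form q D 0 g"
proof -
  define e where "e = (\<lambda>y. sqrt (g y))"
  have e_sq: "(e y)\<^sup>2 = g y" for y
    using g by (simp add: e_def prob_simplex_def)
  have "(if adj y y' then (e y - e y')\<^sup>2 else 0) / (2 * real CARD('d)) \<le> q y y' * (e y - e y')\<^sup>2"
    if "y \<in> D" "y' \<in> D" for y y'
  proof (cases "adj y y'")
    case True
    have "1 / (2 * real CARD('d)) * (e y - e y')\<^sup>2 \<le> q y y' * (e y - e y')\<^sup>2"
      by (rule mult_right_mono[OF q_adj[OF that True]]) simp
    then show ?thesis
      using True by simp
  next
    case False
    then show ?thesis
      using q_nonneg[OF that] by simp
  qed
  then have "energy e D \<le> (\<Sum>y\<in>D. \<Sum>y'\<in>D. q y y' * (e y - e y')\<^sup>2)"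
    unfolding energy_eq_sum_adj[OF D] by (intro sum_mono) auto
  also have "\<dots> = 2 * (\<Sum>y\<in>D. (\<Sum>y'\<in>D. q y y') * (e y)\<^sup>2) - 2 * (\<Sum>y\<in>D. \<Sum>y'\<in>D. q y y' * (e y * e y'))"
    by (rule sum_kernel_sq_diff[OF q_commute])
  also have "\<dots> = 2 * (\<Sum>y\<in>D. (\<Sum>y'\<in>D. q y y') * g y) - 2 * sqrt_form q D 0 g"
    by (simp only: e_sq) (simp add: sqrt_form_def e_def)
  also have "(\<Sum>y\<in>D. (\<Sum>y'\<in>D. q y y') * g y) \<le> (\<Sum>y\<in>D. 1 * g y)"
    using g by (intro sum_mono mult_right_mono q_rowsum) (auto simp: prob_simplex_def)
  finally show ?thesis
    using g by (simp add: e_def prob_simplex_def)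
qed

section \<open>The large deviation bound\<close>

lemma exists_start_measure_le_energy:
  fixes D :: "('d::finite \<Rightarrow> int) set"
  assumes D: "finite D" "D \<noteq> {}" and C: "l1_closed C D" "l1_convex C" "C \<inter> prob_simplex D \<noteq> {}"
    and t: "t \<ge> 1" and \<delta>: "\<delta> > 0"
    and I_le: "\<And>h. h \<in> C \<inter> prob_simplex D \<Longrightarrow> I \<le> energy (\<lambda>y. sqrt (h y)) D / 2"
  shows "\<exists>x\<in>closure_nb D. measure srw_steps {\<omega>. tau_fin x \<omega> D t \<and> (\<lambda>y. locTD x \<omega> D t y / real t) \<in> C}
    \<le> exp (- real t * (I - (2 * sqrt \<delta> + \<delta>) * card D))"
proof -
  obtain g f where g: "g \<in> C \<inter> prob_simplex D" and f_pos: "\<forall>y\<in>D. f y > 0"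
    and log_ratio: "\<forall>l\<in>C \<inter> prob_simplex D. 1 - sqrt_form (trace_kernel D) D \<delta> g
      \<le> (\<Sum>y\<in>D. l y * ln (f y / (\<Sum>y'\<in>D. trace_kernel D y y' * f y')))"
    using exists_log_ratio_bound[OF D(1) C trace_kernel_commute trace_kernel_nonneg
        trace_kernel_apply_pos \<delta>] D(1)
    by blast
  have "energy (\<lambda>y. sqrt (g y)) D / 2 \<le> 1 - sqrt_form (trace_kernel D) D 0 g"
    using g D(1) by (intro energy_le_sqrt_form)
      (auto intro: trace_kernel_commute trace_kernel_nonneg sum_trace_kernel_le trace_kernel_ge_if_adj)
  moreover have "sqrt_form (trace_kernel D) D \<delta> g \<le> sqrt_form (trace_kernel D) D 0 g + (2 * sqrt \<delta> + \<delta>) * card D"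
    using g D(1) \<delta> by (intro sqrt_form_le_add) (auto intro: trace_kernel_nonneg sum_trace_kernel_le)
  ultimately have "I - (2 * sqrt \<delta> + \<delta>) * card D \<le> 1 - sqrt_form (trace_kernel D) D \<delta> g"
    using I_le[OF g] by linarith
  with log_ratio show ?thesis
    using f_pos by (intro exists_start_measure_le[OF D t, where f = f]) (auto intro: order.trans)
qed

lemma INF_energy_eq_ereal:
  assumes "C \<inter> prob_simplex D \<noteq> {}"
  obtains I where "(INF h\<in>{h\<in>C. \<forall>y. h y \<ge> 0}. ereal (energy (\<lambda>y. sqrt (h y)) D / 2)) = ereal I"
    and "\<And>h. h \<in> C \<inter> prob_simplex D \<Longrightarrow> I \<le> energy (\<lambda>y. sqrt (h y)) D / 2"
proof -
  let ?I = "INF h\<in>{h\<in>C. \<forall>y. h y \<ge> 0}. ereal (energy (\<lambda>y. sqrt (h y)) D / 2)"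
  have le: "?I \<le> ereal (energy (\<lambda>y. sqrt (h y)) D / 2)" if "h \<in> C \<inter> prob_simplex D" for h
    using that by (intro INF_lower) (auto simp: prob_simplex_def)
  obtain h0 where "h0 \<in> C \<inter> prob_simplex D"
    using assms by blast
  have "?I < \<infinity>"
    using le[OF \<open>h0 \<in> C \<inter> prob_simplex D\<close>] by (rule order.strict_trans1) simp
  moreover have "0 \<le> ?I"
    by (intro INF_greatest) (simp add: energy_nonneg)
  ultimately have I: "?I = ereal (real_of_ereal ?I)"
    by (cases ?I) auto
  show ?thesis
  proof (rule that)
    show "?I = ereal (real_of_ereal ?I)"
      by (rule I)
    show "real_of_ereal ?I \<le> energy (\<lambda>y. sqrt (h y)) D / 2" if "h \<in> C \<inter> prob_simplex D" for h
      using le[OF that] by (subst (asm) I) simp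
  qed
qed

lemma ereal_le_of_tendsto_at_right:
  fixes f :: "real \<Rightarrow> real"
  assumes "(f \<longlongrightarrow> c) (at_right 0)" and "\<And>\<delta>. \<delta> > 0 \<Longrightarrow> L \<le> ereal (f \<delta>)"
  shows "L \<le> ereal c"
proof (rule tendsto_lowerbound)
  show "((\<lambda>\<delta>. ereal (f \<delta>)) \<longlongrightarrow> ereal c) (at_right 0)"
    using assms(1) by simp
  show "\<forall>\<^sub>F \<delta> in at_right 0. L \<le> ereal (f \<delta>)"
    using assms(2) by (auto simp: eventually_at_right_less intro: eventually_mono[OF eventually_at_right_less])
qed simp

lemma INF_measure_le_exp_energy:
  fixes D :: "('d::finite \<Rightarrow> int) set"
  assumes D: "finite D" "D \<noteq> {}" and C: "l1_closed C D" "l1_convex C" "C \<inter> prob_simplex D \<noteq> {}"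
    and t: "t \<ge> 1" and I_le: "\<And>h. h \<in> C \<inter> prob_simplex D \<Longrightarrow> I \<le> energy (\<lambda>y. sqrt (h y)) D / 2"
  shows "(INF x\<in>closure_nb D. ereal (measure srw_steps
    {\<omega>. tau_fin x \<omega> D t \<and> (\<lambda>y. locTD x \<omega> D t y / real t) \<in> C})) \<le> ereal (exp (- real t * I))"
proof (rule ereal_le_of_tendsto_at_right)
  show "((\<lambda>\<delta>. exp (- real t * (I - (2 * sqrt \<delta> + \<delta>) * card D))) \<longlongrightarrow> exp (- real t * I)) (at_right 0)"
    by (rule tendsto_eq_intros refl | simp)+
  show "(INF x\<in>closure_nb D. ereal (measure srw_steps
      {\<omega>. tau_fin x \<omega> D t \<and> (\<lambda>y. locTD x \<omega> D t y / real t) \<in> C}))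
    \<le> ereal (exp (- real t * (I - (2 * sqrt \<delta> + \<delta>) * card D)))" if "\<delta> > 0" for \<delta>
    using exists_start_measure_le_energy[OF D C t that I_le] by (auto intro: INF_lower2)
qed

theorem theorem1p4:
  fixes D :: "('d::finite \<Rightarrow> int) set"
    and C :: "(('d \<Rightarrow> int) \<Rightarrow> real) set"
    and t :: nat
  assumes "CARD('d) \<ge> 3"
    and "finite D" and "D \<noteq> {}"
    and "l1_set C D" and "l1_convex C" and "l1_closed C D"
    and "t \<ge> 1"
  shows "(INF x\<in>closure_nb D. ereal (measure srw_steps
            {\<omega>. tau_fin x \<omega> D t \<and> (\<lambda>y. locTD x \<omega> D t y / real t) \<in> C}))
         \<le> (let I = (INF h\<in>{h\<in>C. \<forall>y. h y \<ge> 0}. ereal (energy (\<lambda>y. sqrt (h y)) D / 2))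
            in if I = \<infinity> then 0 else ereal (exp (- real t * real_of_ereal I)))"
proof (cases "C \<inter> prob_simplex D = {}")
  case True
  obtain x where "x \<in> D"
    using assms(3) by blast
  then have "(INF x\<in>closure_nb D. ereal (measure srw_steps
      {\<omega>. tau_fin x \<omega> D t \<and> (\<lambda>y. locTD x \<omega> D t y / real t) \<in> C}))
    \<le> ereal (measure srw_steps {\<omega>. tau_fin x \<omega> D t \<and> (\<lambda>y. locTD x \<omega> D t y / real t) \<in> C})"
    by (intro INF_lower) (simp add: closure_nb_def)
  also have "{\<omega>. tau_fin x \<omega> D t \<and> (\<lambda>y. locTD x \<omega> D t y / real t) \<in> C} = {}"
    using True locTD_in_prob_simplex[OF assms(2,7)] by blast
  finally show ?thesis
    by (rule order.trans) (simp add: Let_def)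
next
  case False
  obtain I where I: "(INF h\<in>{h\<in>C. \<forall>y. h y \<ge> 0}. ereal (energy (\<lambda>y. sqrt (h y)) D / 2)) = ereal I"
    and I_le: "\<And>h. h \<in> C \<inter> prob_simplex D \<Longrightarrow> I \<le> energy (\<lambda>y. sqrt (h y)) D / 2"
    using INF_energy_eq_ereal[OF False] by blast
  show ?thesis
    using INF_measure_le_exp_energy[OF assms(2,3,6,5) False assms(7) I_le] by (simp add: I Let_def)
qed

end
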